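(* Let $H=(Q,\pi,f_0,f_1)$ satisfy Assumptions A1 and A2 and assume that the distribution function of $(f_1/f_0)(X_1)$ is continuous and strictly increasing. Then the function $m(\lambda)=E[\ell_i^\infty(X)\mid\ell_i^\infty(X)<\lambda]$ is continuous and strictly increasing on $(0,1)$, and $m(\lambda)<\lambda$ for all $\lambda\in(0,1)$.
   Context: Two-state HMM: $\mu$ Lebesgue on $\mathbb R$ or counting on $\mathbb Z$; under $\Pi_H$, $(\theta_n)$ is a Markov chain on $\{0,1\}$ with transition matrix $Q$ and initial law $\pi$, and given $\theta$ the $X_n$ are independent with $\mu$-densities $f_{\theta_n}$. Assumption A1: (i) some $\nu>0$ has $\max_jE_{X\sim f_j}|X|^\nu<\infty$; (ii) some $x^*\in\mathbb R\cup\{\pm\infty\}$ has $f_1/f_0\to\infty$ as $x\uparrow x^*$ or as $x\downarrow x^*$ (conventions $1/0=\infty,0/0=0$). Assumption A2: $Q$ has distinct rows, $\min_{ij}Q_{ij}>0$, and $\pi$ is invariant for $Q$. $\ell_i^\infty(X)=\Pi_H(\theta_i=0\mid(X_n)_{n\in\mathbb Z})$ for the bi-infinite stationary HMM $(X_n,\theta_n)_{n\in\mathbb Z}$; by stationarity $m$ does not depend on $i$. *)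

theory Defs
  imports "HOL-Probability.Probability"
begin

definition int_counting :: "real measure" where
  "int_counting = distr (count_space UNIV) borel real_of_int"

definition ref_measure :: "real measure \<Rightarrow> real set \<Rightarrow> bool" where
  "ref_measure \<mu> D \<longleftrightarrow> (\<mu> = lborel \<and> D = UNIV) \<or> (\<mu> = int_counting \<and> D = \<int>)"

definition densities :: "real measure \<Rightarrow> (nat \<Rightarrow> real \<Rightarrow> real) \<Rightarrow> bool" where
  "densities \<mu> f \<longleftrightarrow> (\<forall>j\<in>{0,1}. f j \<in> borel_measurable borel \<and> (\<forall>x. f j x \<ge> 0)
      \<and> (\<integral>\<^sup>+x. ennreal (f j x) \<partial>\<mu>) = 1)"

definition lr :: "(nat \<Rightarrow> real \<Rightarrow> real) \<Rightarrow> real \<Rightarrow> ereal" where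
  "lr f x = (if f 0 x = 0 then (if f 1 x = 0 then 0 else \<infinity>) else ereal (f 1 x / f 0 x))"

definition A1 :: "real measure \<Rightarrow> real set \<Rightarrow> (nat \<Rightarrow> real \<Rightarrow> real) \<Rightarrow> bool" where
  "A1 \<mu> D f \<longleftrightarrow>
     (\<exists>\<nu>>0. \<forall>j\<in>{0,1}. (\<integral>\<^sup>+x. ennreal (\<bar>x\<bar> powr \<nu> * f j x) \<partial>\<mu>) < \<infinity>) \<and>
     (\<exists>F. (F = at_top \<or> F = at_bot \<or> (\<exists>c. F = at_left c \<or> F = at_right c)) \<and>
          inf F (principal D) \<noteq> bot \<and>
          ((\<lambda>x. lr f x) \<longlongrightarrow> \<infinity>) (inf F (principal D)))"

definition A2 :: "(nat \<Rightarrow> nat \<Rightarrow> real) \<Rightarrow> (nat \<Rightarrow> real) \<Rightarrow> bool" where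
  "A2 Q \<pi> \<longleftrightarrow>
     (\<forall>i\<in>{0,1}. Q i 0 + Q i 1 = 1) \<and>
     (\<forall>i\<in>{0,1}. \<forall>j\<in>{0,1}. Q i j > 0) \<and>
     (Q 0 0, Q 0 1) \<noteq> (Q 1 0, Q 1 1) \<and>
     \<pi> 0 \<ge> 0 \<and> \<pi> 1 \<ge> 0 \<and> \<pi> 0 + \<pi> 1 = 1 \<and>
     (\<forall>j\<in>{0,1}. \<pi> j = \<pi> 0 * Q 0 j + \<pi> 1 * Q 1 j)"

text \<open>(theta_n, X_n)_{n in Z} on the probability space M is the bi-infinite stationary HMM:
all finite-window joint laws are those of the HMM with parameters (Q, pi, f_0, f_1).\<close>
definition stationary_hmm ::
  "'w measure \<Rightarrow> real measure \<Rightarrow> (nat \<Rightarrow> nat \<Rightarrow> real) \<Rightarrow> (nat \<Rightarrow> real) \<Rightarrow>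
   (nat \<Rightarrow> real \<Rightarrow> real) \<Rightarrow> (int \<Rightarrow> 'w \<Rightarrow> nat) \<Rightarrow> (int \<Rightarrow> 'w \<Rightarrow> real) \<Rightarrow> bool" where
  "stationary_hmm M \<mu> Q \<pi> f \<theta> X \<longleftrightarrow>
     prob_space M \<and>
     (\<forall>n. \<theta> n \<in> measurable M (count_space UNIV)) \<and>
     (\<forall>n. X n \<in> borel_measurable M) \<and>
     (\<forall>a b (s::int \<Rightarrow> nat) (B::int \<Rightarrow> real set).
        a \<le> b \<longrightarrow> (\<forall>n\<in>{a..b}. s n \<in> {0,1} \<and> B n \<in> sets borel) \<longrightarrow>
        emeasure M {\<omega>\<in>space M. \<forall>n\<in>{a..b}. \<theta> n \<omega> = s n \<and> X n \<omega> \<in> B n}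
        = ennreal (\<pi> (s a) * (\<Prod>n\<in>{a..<b}. Q (s n) (s (n + 1))))
          * (\<Prod>n\<in>{a..b}. \<integral>\<^sup>+x\<in>B n. ennreal (f (s n) x) \<partial>\<mu>))"

definition obs_algebra :: "'w measure \<Rightarrow> (int \<Rightarrow> 'w \<Rightarrow> real) \<Rightarrow> 'w measure" where
  "obs_algebra M X = vimage_algebra (space M) (\<lambda>\<omega> n. X n \<omega>) (Pi\<^sub>M UNIV (\<lambda>_. borel))"

definition ell_inf :: "'w measure \<Rightarrow> (int \<Rightarrow> 'w \<Rightarrow> nat) \<Rightarrow> (int \<Rightarrow> 'w \<Rightarrow> real) \<Rightarrow> int \<Rightarrow> 'w \<Rightarrow> real" where
  "ell_inf M \<theta> X i = real_cond_exp M (obs_algebra M X)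
      (indicator {\<omega>\<in>space M. \<theta> i \<omega> = 0})"

definition cond_mean_below :: "'w measure \<Rightarrow> ('w \<Rightarrow> real) \<Rightarrow> real \<Rightarrow> real" where
  "cond_mean_below M L t =
     (\<integral>\<omega>. L \<omega> * indicator {\<omega>\<in>space M. L \<omega> < t} \<omega> \<partial>M)
       / measure M {\<omega>\<in>space M. L \<omega> < t}"

definition lr_cdf :: "'w measure \<Rightarrow> (nat \<Rightarrow> real \<Rightarrow> real) \<Rightarrow> (int \<Rightarrow> 'w \<Rightarrow> real) \<Rightarrow> real \<Rightarrow> real" where
  "lr_cdf M f X t = measure M {\<omega>\<in>space M. lr f (X 1 \<omega>) \<le> ereal t}"

end

theory Submission
  imports Defs
begin

(* Let W be the observation sequence with X i replaced by 0. Given the hidden state theta i = j,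
   X i is independent of W and has density f j, so the posterior probability of state 0 is
     q0(W) f0(X i) / (q0(W) f0(X i) + q1(W) f1(X i)),
   where q j(W) = P(theta i = j | W) are Radon-Nikodym derivatives. On a level set of this
   posterior the likelihood ratio (f1/f0)(X i) is a function of W, so the continuity of its
   distribution function leaves no atoms in (0,1). Exchanging the state at i only rescales the
   weight of each hidden path by a positive transition ratio, so the law of W given theta i = 0
   is absolutely continuous w.r.t. the law given theta i = 1; hence q0 and q1 are positive together
   with positive probability, and strict monotonicity of the distribution function puts mass on
   every subinterval of (0,1). For a [0,1]-valued Y with these two properties,
   t \<mapsto> E[Y | Y < t] is continuous, strictly increasing and below t. *)

section \<open>Conditional means below a level\<close>

lemma (in finite_measure) integrable_bounded_mult_indicator:
  fixes h :: "'a \<Rightarrow> real"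
  assumes "S \<in> sets M" "h \<in> borel_measurable M" "\<And>x. x \<in> space M \<Longrightarrow> \<bar>h x\<bar> \<le> B"
  shows "integrable M (\<lambda>x. h x * indicator S x)"
proof (rule integrable_const_bound[where B="\<bar>B\<bar>"])
  show "AE x in M. norm (h x * indicator S x) \<le> \<bar>B\<bar>"
    using assms(3) by (intro AE_I2) (fastforce simp: indicator_def)
qed (use assms(1,2) in measurable)

lemma (in prob_space) cond_mean_below_cong_AE:
  assumes [measurable]: "Y \<in> borel_measurable M" "Y' \<in> borel_measurable M"
    and eq: "AE x in M. Y x = Y' x"
  shows "cond_mean_below M Y = cond_mean_below M Y'"
proof
  fix t
  have "measure M {x\<in>space M. Y x < t} = measure M {x\<in>space M. Y' x < t}"
    using eq by (intro measure_eq_AE) (auto elim: eventually_mono)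
  moreover have "(\<integral>x. Y x * indicator {x\<in>space M. Y x < t} x \<partial>M)
      = (\<integral>x. Y' x * indicator {x\<in>space M. Y' x < t} x \<partial>M)"
    using eq by (intro integral_cong_AE) (auto elim!: eventually_mono simp: indicator_def)
  ultimately show "cond_mean_below M Y t = cond_mean_below M Y' t"
    unfolding cond_mean_below_def by simp
qed

locale unit_interval_variable = prob_space M for M :: "'w measure" +
  fixes Y :: "'w \<Rightarrow> real"
  assumes measurable_Y[measurable]: "Y \<in> borel_measurable M"
    and Y_range: "\<And>x. x \<in> space M \<Longrightarrow> 0 \<le> Y x \<and> Y x \<le> 1"
begin

definition mass_below :: "real \<Rightarrow> real" where
  "mass_below t = measure M {x\<in>space M. Y x < t}"

definition integral_below :: "real \<Rightarrow> real" where
  "integral_below t = (\<integral>x. Y x * indicator {x\<in>space M. Y x < t} x \<partial>M)"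

abbreviation band :: "real \<Rightarrow> real \<Rightarrow> 'w set" where
  "band s t \<equiv> {x\<in>space M. s \<le> Y x \<and> Y x < t}"

lemma cond_mean_below_eq: "cond_mean_below M Y t = integral_below t / mass_below t"
  unfolding cond_mean_below_def integral_below_def mass_below_def ..

lemma integrable_Y_indicator: "S \<in> sets M \<Longrightarrow> integrable M (\<lambda>x. Y x * indicator S x)"
  by (rule integrable_bounded_mult_indicator[where B=1]) (auto dest: Y_range)

lemma below_split:
  assumes "s \<le> t"
  shows mass_below_split: "mass_below t = mass_below s + measure M (band s t)"
    and integral_below_split:
      "integral_below t = integral_below s + (\<integral>x. Y x * indicator (band s t) x \<partial>M)"
proof -
  have "{x\<in>space M. Y x < t} = {x\<in>space M. Y x < s} \<union> band s t"
    using assms by auto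
  then show "mass_below t = mass_below s + measure M (band s t)"
    unfolding mass_below_def by (simp, subst finite_measure_Union) auto
  have "(\<lambda>x. Y x * indicator {x\<in>space M. Y x < t} x)
      = (\<lambda>x. Y x * indicator {x\<in>space M. Y x < s} x + Y x * indicator (band s t) x)"
    using assms by (auto simp: indicator_def fun_eq_iff)
  then show "integral_below t = integral_below s + (\<integral>x. Y x * indicator (band s t) x \<partial>M)"
    unfolding integral_below_def by (simp add: integrable_Y_indicator)
qed

lemma integral_below_less:
  assumes "0 < mass_below t"
  shows "integral_below t < t * mass_below t"
proof -
  define S where "S = {x\<in>space M. Y x < t}"
  have S[measurable]: "S \<in> sets M" unfolding S_def by measurable
  have int: "integrable M (\<lambda>x. (t - Y x) * indicator S x)"
    by (rule integrable_bounded_mult_indicator[where B="\<bar>t\<bar> + 1"]) (auto dest: Y_range)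
  have "integrable M (\<lambda>x. t * indicator S x)"
    by (rule integrable_bounded_mult_indicator[OF S, where B="\<bar>t\<bar>"]) auto
  then have gap: "t * mass_below t - integral_below t = (\<integral>x. (t - Y x) * indicator S x \<partial>M)"
    unfolding mass_below_def integral_below_def S_def[symmetric] using integrable_Y_indicator[OF S]
    by (simp add: left_diff_distrib)
  have nonneg: "AE x in M. 0 \<le> (t - Y x) * indicator S x"
    by (auto simp: S_def indicator_def)
  have "(\<integral>x. (t - Y x) * indicator S x \<partial>M) \<noteq> 0"
  proof
    assume "(\<integral>x. (t - Y x) * indicator S x \<partial>M) = 0"
    then have "AE x in M. (t - Y x) * indicator S x = 0"
      using integral_nonneg_eq_0_iff_AE[OF int nonneg] by simp
    then have "AE x in M. x \<notin> S"
      by (elim eventually_mono) (auto simp: S_def indicator_def)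
    then have "emeasure M S = 0"
      using AE_iff_measurable[OF S, of "\<lambda>x. x \<notin> S"] sets.sets_into_space[OF S] by auto
    with assms show False by (simp add: mass_below_def S_def[symmetric] emeasure_eq_measure)
  qed
  moreover have "0 \<le> (\<integral>x. (t - Y x) * indicator S x \<partial>M)"
    using nonneg by (rule integral_nonneg_AE)
  ultimately show ?thesis using gap by linarith
qed

lemma cond_mean_below_less:
  "0 < mass_below t \<Longrightarrow> cond_mean_below M Y t < t"
  using integral_below_less by (simp add: cond_mean_below_eq divide_less_eq)

lemma cond_mean_below_strict_mono:
  assumes st: "s < t" and Ds: "0 < mass_below s" and band: "0 < measure M (band s t)"
  shows "cond_mean_below M Y s < cond_mean_below M Y t"
proof -
  define E where "E = (\<integral>x. Y x * indicator (band s t) x \<partial>M)"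
  have "integrable M (\<lambda>x. s * indicator (band s t) x)"
    by (rule integrable_bounded_mult_indicator[where B="\<bar>s\<bar>"]) auto
  then have "(\<integral>x. s * indicator (band s t) x \<partial>M) \<le> E"
    unfolding E_def by (intro integral_mono integrable_Y_indicator) (auto simp: indicator_def)
  then have EDel: "s * measure M (band s t) \<le> E" by simp
  have "mass_below s * (s * measure M (band s t)) \<le> mass_below s * E"
    using EDel Ds by (intro mult_left_mono) auto
  moreover have "integral_below s * measure M (band s t) < s * mass_below s * measure M (band s t)"
    using integral_below_less[OF Ds] band by (intro mult_strict_right_mono) auto
  ultimately have "integral_below s * (mass_below s + measure M (band s t))
      < (integral_below s + E) * mass_below s"
    by (simp add: algebra_simps)
  then show ?thesis
    unfolding cond_mean_below_eq mass_below_split[OF less_imp_le[OF st]]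
      integral_below_split[OF less_imp_le[OF st]] E_def[symmetric]
    using Ds band by (simp add: divide_less_eq less_divide_eq mult.commute)
qed

lemma integral_below_diff_le: "\<bar>integral_below t - integral_below s\<bar> \<le> \<bar>mass_below t - mass_below s\<bar>"
proof -
  have "\<bar>integral_below t - integral_below s\<bar> \<le> mass_below t - mass_below s" if "s \<le> t" for s t
  proof -
    have "\<bar>integral_below t - integral_below s\<bar> = \<bar>\<integral>x. Y x * indicator (band s t) x \<partial>M\<bar>"
      using integral_below_split[OF that] by simp
    also have "\<dots> \<le> (\<integral>x. \<bar>Y x * indicator (band s t) x\<bar> \<partial>M)"
      by (rule integral_abs_bound)
    also have "\<dots> \<le> (\<integral>x. indicator (band s t) x \<partial>M)"
      using integrable_Y_indicator[of "band s t"] integrable_bounded_mult_indicator[of "band s t" "\<lambda>_. 1" 1]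
      by (intro integral_mono) (auto simp: indicator_def dest: Y_range)
    also have "\<dots> = mass_below t - mass_below s"
      using mass_below_split[OF that] by simp
    finally show ?thesis .
  qed
  from this[of s t] this[of t s] show ?thesis by (cases "s \<le> t") auto
qed

lemma continuous_on_mass_below:
  assumes "\<And>t. t \<in> U \<Longrightarrow> measure M {x\<in>space M. Y x = t} = 0"
  shows "continuous_on U mass_below"
proof -
  have law: "finite_borel_measure (distr M borel Y)"
    by (intro real_distribution.finite_borel_measure_M)
       (simp add: real_distribution_def prob_space_distr real_distribution_axioms_def)
  have "mass_below t = cdf (distr M borel Y) t" if "t \<in> U" for t
  proof -
    have "cdf (distr M borel Y) t = measure M ({x\<in>space M. Y x < t} \<union> {x\<in>space M. Y x = t})"
      unfolding cdf_def by (auto simp: measure_distr vimage_def Int_def intro!: arg_cong[where f="measure M"])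
    also have "\<dots> = mass_below t"
      unfolding mass_below_def using assms[OF that] by (subst finite_measure_Union) auto
    finally show ?thesis ..
  qed
  moreover have "continuous_on U (cdf (distr M borel Y))"
  proof (intro continuous_at_imp_continuous_on ballI)
    fix t assume "t \<in> U"
    then show "isCont (cdf (distr M borel Y)) t"
      using assms finite_borel_measure.isCont_cdf[OF law] by (simp add: measure_distr vimage_def Int_def conj_commute)
  qed
  ultimately show ?thesis by (auto intro: continuous_on_cong[THEN iffD1])
qed

lemma continuous_on_cond_mean_below:
  assumes atoms: "\<And>t. t \<in> U \<Longrightarrow> measure M {x\<in>space M. Y x = t} = 0"
    and pos: "\<And>t. t \<in> U \<Longrightarrow> 0 < mass_below t"
  shows "continuous_on U (cond_mean_below M Y)"
proof -
  have D: "continuous_on U mass_below" by (rule continuous_on_mass_below[OF atoms])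
  have N: "continuous_on U integral_below"
    unfolding continuous_on_def
  proof (intro ballI)
    fix t assume "t \<in> U"
    then have "((\<lambda>s. \<bar>mass_below s - mass_below t\<bar>) \<longlongrightarrow> 0) (at t within U)"
      using D by (intro tendsto_rabs_zero) (simp add: continuous_on_def LIM_zero)
    then have "((\<lambda>s. integral_below s - integral_below t) \<longlongrightarrow> 0) (at t within U)"
      by (rule Lim_null_comparison[rotated]) (auto simp: integral_below_diff_le)
    then show "(integral_below \<longlongrightarrow> integral_below t) (at t within U)"
      by (simp add: LIM_zero_iff)
  qed
  have "continuous_on U (\<lambda>t. integral_below t / mass_below t)"
    using N D pos by (intro continuous_intros) (auto dest: pos)
  then show ?thesis by (simp add: cond_mean_below_eq[abs_def])
qed

lemma cond_mean_below_properties: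
  assumes atoms: "\<And>t. t \<in> {0<..<1} \<Longrightarrow> measure M {x\<in>space M. Y x = t} = 0"
    and pos: "\<And>a b. 0 < a \<Longrightarrow> a < b \<Longrightarrow> b < 1 \<Longrightarrow> 0 < measure M {x\<in>space M. a < Y x \<and> Y x < b}"
  shows "continuous_on {0<..<1} (cond_mean_below M Y)
    \<and> strict_mono_on {0<..<1} (cond_mean_below M Y)
    \<and> (\<forall>t\<in>{0<..<1}. cond_mean_below M Y t < t)"
proof -
  have band_pos: "0 < measure M (band s t)" if "0 < s" "s < t" "t < 1" for s t
    using pos[OF that] by (rule less_le_trans) (auto intro!: finite_measure_mono)
  have mass_pos: "0 < mass_below t" if "t \<in> {0<..<1}" for t
    using band_pos[of "t/2" t] that unfolding mass_below_def
    by (auto intro: less_le_trans intro!: finite_measure_mono)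
  show ?thesis
    using continuous_on_cond_mean_below[of "{0<..<1}", OF atoms mass_pos] cond_mean_below_less[OF mass_pos]
      cond_mean_below_strict_mono[OF _ mass_pos band_pos]
    by (auto intro!: strict_mono_onI)
qed

end

section \<open>Posterior odds and distribution functions\<close>

lemma ennreal_mult_posterior_add:
  fixes a b :: real
  assumes "0 \<le> a" "0 \<le> b"
  shows "ennreal a * ennreal (a / (a + b)) + ennreal b * ennreal (a / (a + b)) = ennreal a"
proof (cases "a + b = 0")
  case False
  then have "a * (a / (a + b)) + b * (a / (a + b)) = a"
    by (simp only: distrib_right[symmetric]) simp
  then show ?thesis
    using assms by (simp add: ennreal_mult[symmetric] ennreal_plus[symmetric] del: ennreal_plus)
qed (use assms in simp)

lemma posterior_level_ratio:
  fixes a0 b0 a1 b1 t :: real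
  assumes "0 \<le> a0" "0 \<le> b0" "0 \<le> a1" "0 \<le> b1" "0 < t" "t < 1"
    and "a0 * b0 / (a0 * b0 + a1 * b1) = t"
  shows "b0 \<noteq> 0 \<and> b1 / b0 = a0 * (1 - t) / (t * a1)"
proof -
  define A where "A = a0 * b0"
  define B where "B = a1 * b1"
  have "A \<ge> 0" "B \<ge> 0" using assms unfolding A_def B_def by auto
  have "A + B \<noteq> 0" using assms(5,7) unfolding A_def B_def by auto
  then have eq: "A = t * (A + B)" using assms(7) unfolding A_def[symmetric] B_def[symmetric]
    by (simp add: field_simps)
  have Apos: "A > 0"
    using eq \<open>A \<ge> 0\<close> \<open>B \<ge> 0\<close> \<open>A + B \<noteq> 0\<close> assms(5) by (cases "A = 0") auto
  have Beq: "B = A * (1 - t) / t" using eq assms(5) by (simp add: field_simps)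
  have "B > 0" using Beq Apos assms(5,6) by simp
  then have pos: "a0 > 0" "b0 > 0" "a1 > 0" "b1 > 0"
    using Apos assms(1-4) unfolding A_def B_def by (auto simp: zero_less_mult_iff)
  have "b1 / b0 = (B / a1) / (A / a0)" unfolding A_def B_def using pos by simp
  also have "\<dots> = a0 * (1 - t) / (t * a1)"
    unfolding Beq using pos Apos assms(5) by (simp add: field_simps)
  finally show ?thesis using pos by simp
qed

lemma posterior_between:
  fixes a0 a1 b0 a b r :: real
  assumes "0 < a0" "0 < a1" "0 < b0" "0 < a" "a < b" "b < 1"
    and "a0 * (1 - b) / (b * a1) < r" "r < a0 * (1 - a) / (a * a1)"
  shows "a < a0 * b0 / (a0 * b0 + a1 * (r * b0)) \<and> a0 * b0 / (a0 * b0 + a1 * (r * b0)) < b"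
proof -
  have "0 < a0 * (1 - b) / (b * a1)" using assms(1,2,4-6) by simp
  then have "0 < r" using assms(7) by linarith
  then have d: "a0 + a1 * r > 0" using assms(1,2) by (simp add: add_pos_pos)
  have "a0 * b0 + a1 * (r * b0) = b0 * (a0 + a1 * r)" by (simp add: algebra_simps)
  then have e: "a0 * b0 / (a0 * b0 + a1 * (r * b0)) = a0 / (a0 + a1 * r)"
    using assms(3) by simp
  have "a * a1 * r < a0 * (1 - a)" using assms(8) assms(2,4) by (simp add: field_simps)
  then have "a < a0 / (a0 + a1 * r)" using d by (simp add: field_simps)
  moreover have "a0 * (1 - b) < b * a1 * r" using assms(7) assms(2,4,5) by (simp add: field_simps)
  then have "a0 / (a0 + a1 * r) < b" using d by (simp add: field_simps)
  ultimately show ?thesis using e by simp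
qed

lemma (in prob_space) measure_eq_zero_if_isCont_cdf:
  fixes Z :: "'a \<Rightarrow> ereal"
  assumes [measurable]: "Z \<in> borel_measurable M"
    and cont: "isCont (\<lambda>t. measure M {x\<in>space M. Z x \<le> ereal t}) c"
  shows "measure M {x\<in>space M. Z x = ereal c} = 0"
proof (rule ccontr)
  define F where "F t = measure M {x\<in>space M. Z x \<le> ereal t}" for t
  define m where "m = measure M {x\<in>space M. Z x = ereal c}"
  assume "measure M {x\<in>space M. Z x = ereal c} \<noteq> 0"
  then have "m > 0" unfolding m_def using measure_nonneg[of M] by (simp add: order_less_le)
  then obtain d where d: "d > 0" "\<And>y. dist y c < d \<Longrightarrow> dist (F y) (F c) < m"
    using cont unfolding F_def[symmetric] continuous_at_eps_delta by blast
  define y where "y = c - d / 2"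
  have "F c - F y < m" using d(2)[of y] d(1) by (simp add: y_def dist_real_def abs_less_iff)
  moreover have "F y + m = measure M ({x\<in>space M. Z x \<le> ereal y} \<union> {x\<in>space M. Z x = ereal c})"
    unfolding F_def m_def using d(1) by (subst finite_measure_Union) (auto simp: y_def)
  moreover have "\<dots> \<le> F c"
    unfolding F_def using d(1)
    by (intro finite_measure_mono) (auto simp: y_def intro: order_trans[of _ "ereal y"])
  ultimately show False by simp
qed

lemma (in prob_space) measure_between_pos_if_strict_mono_cdf:
  fixes Z :: "'a \<Rightarrow> ereal"
  assumes [measurable]: "Z \<in> borel_measurable M"
    and mono: "strict_mono_on S (\<lambda>t. measure M {x\<in>space M. Z x \<le> ereal t})"
    and "c1 \<in> S" "c2 \<in> S" "c1 < c2"
  shows "0 < measure M {x\<in>space M. ereal c1 < Z x \<and> Z x \<le> ereal c2}"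
proof -
  have "{x\<in>space M. Z x \<le> ereal c2}
      = {x\<in>space M. Z x \<le> ereal c1} \<union> {x\<in>space M. ereal c1 < Z x \<and> Z x \<le> ereal c2}"
    using assms(5) by (auto intro: order_trans[of _ "ereal c1"])
  then have "measure M {x\<in>space M. Z x \<le> ereal c2}
      = measure M {x\<in>space M. Z x \<le> ereal c1} + measure M {x\<in>space M. ereal c1 < Z x \<and> Z x \<le> ereal c2}"
    by (simp, subst finite_measure_Union) auto
  moreover have "measure M {x\<in>space M. Z x \<le> ereal c1} < measure M {x\<in>space M. Z x \<le> ereal c2}"
    using strict_mono_onD[OF mono] assms(3-5) by blast
  ultimately show ?thesis by simp
qed

section \<open>The stationary hidden Markov model\<close>

locale hmm_model = prob_space M
  for M :: "'w measure" +
  fixes \<mu> :: "real measure" and D :: "real set"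
    and Q :: "nat \<Rightarrow> nat \<Rightarrow> real" and \<pi> :: "nat \<Rightarrow> real" and f :: "nat \<Rightarrow> real \<Rightarrow> real"
    and \<theta> :: "int \<Rightarrow> 'w \<Rightarrow> nat" and X :: "int \<Rightarrow> 'w \<Rightarrow> real"
  assumes ref: "ref_measure \<mu> D"
    and dens: "densities \<mu> f"
    and a2: "A2 Q \<pi>"
    and shmm: "stationary_hmm M \<mu> Q \<pi> f \<theta> X"
begin

lemma measurable_theta[measurable]: "\<theta> n \<in> measurable M (count_space UNIV)"
  using shmm unfolding stationary_hmm_def by auto

lemma measurable_X[measurable]: "X n \<in> borel_measurable M"
  using shmm unfolding stationary_hmm_def by auto

lemma sets_mu[measurable_cong]: "sets \<mu> = sets borel"
  using ref unfolding ref_measure_def int_counting_def by auto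

lemma borel_measurable_f[measurable]: "j \<in> {0,1} \<Longrightarrow> f j \<in> borel_measurable borel"
  using dens unfolding densities_def by auto

lemma f_nonneg: "j \<in> {0,1} \<Longrightarrow> 0 \<le> f j x"
  using dens unfolding densities_def by auto

lemma measurable_mu_iff_borel: "h \<in> borel_measurable \<mu> \<longleftrightarrow> h \<in> borel_measurable borel"
  using measurable_cong_sets[OF sets_mu refl] by blast

definition emission :: "nat \<Rightarrow> real measure" where
  "emission j = density \<mu> (\<lambda>x. ennreal (f j x))"

lemma sets_emission[measurable_cong]: "sets (emission j) = sets borel"
  by (simp add: emission_def sets_mu)

lemma space_emission[simp]: "space (emission j) = UNIV"
  using sets_eq_imp_space_eq[OF sets_emission] by simp

lemma emeasure_emission:
  "j \<in> {0,1} \<Longrightarrow> B \<in> sets borel \<Longrightarrow> emeasure (emission j) B = (\<integral>\<^sup>+x\<in>B. ennreal (f j x) \<partial>\<mu>)"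
  unfolding emission_def by (subst emeasure_density) (auto simp: measurable_mu_iff_borel sets_mu)

lemma prob_space_emission: "j \<in> {0,1} \<Longrightarrow> prob_space (emission j)"
  using dens emeasure_emission[of j UNIV] unfolding densities_def
  by (intro prob_spaceI) (auto simp: sets_mu)

lemma sigma_finite_emission: "j \<in> {0,1} \<Longrightarrow> sigma_finite_measure (emission j)"
  using prob_space_emission by (simp add: prob_space_def finite_measure_def)

lemma emeasure_emission_eq_measure: "j \<in> {0,1} \<Longrightarrow> emeasure (emission j) B = measure (emission j) B"
  using prob_space_emission[unfolded prob_space_def] finite_measure.emeasure_eq_measure by blast

lemma nn_integral_emission:
  assumes "j \<in> {0,1}" "h \<in> borel_measurable borel"
  shows "(\<integral>\<^sup>+z. h z \<partial>emission j) = (\<integral>\<^sup>+z. ennreal (f j z) * h z \<partial>\<mu>)"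
  unfolding emission_def using assms by (intro nn_integral_density) (auto simp: measurable_mu_iff_borel)

lemma prod_emission_update:
  assumes "finite I" "i \<in> I" "s i \<in> {0,1}" "j \<in> {0,1}" "B i = UNIV"
  shows "(\<Prod>n\<in>I. measure (emission ((s(i := j)) n)) ((B(i := E)) n))
    = measure (emission j) E * (\<Prod>n\<in>I. measure (emission (s n)) (B n))"
proof -
  have "(\<Prod>n\<in>I. measure (emission ((s(i := j)) n)) ((B(i := E)) n))
      = measure (emission j) E * (\<Prod>n\<in>I - {i}. measure (emission (s n)) (B n))"
    using assms by (subst prod.remove[of _ i]) (auto intro!: prod.cong)
  also have "(\<Prod>n\<in>I - {i}. measure (emission (s n)) (B n)) = (\<Prod>n\<in>I. measure (emission (s n)) (B n))"
    using assms prob_space_emission[OF assms(3), THEN prob_space.prob_space]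
    by (subst (2) prod.remove[of _ i]) auto
  finally show ?thesis .
qed

lemma Q_pos: "i \<in> {0,1} \<Longrightarrow> j \<in> {0,1} \<Longrightarrow> Q i j > 0"
  using a2 unfolding A2_def by auto

lemma stationary_law_nonneg: "\<pi> 0 \<ge> 0" "\<pi> 1 \<ge> 0" "\<pi> 0 + \<pi> 1 = 1"
  using a2 unfolding A2_def by auto

lemma stationary_law_pos: "j \<in> {0,1} \<Longrightarrow> \<pi> j > 0"
proof -
  assume j: "j \<in> {0,1}"
  then have "\<pi> j = \<pi> 0 * Q 0 j + \<pi> 1 * Q 1 j" using a2 unfolding A2_def by auto
  moreover have "0 \<le> \<pi> 0 * Q 0 j" "0 \<le> \<pi> 1 * Q 1 j"
    using stationary_law_nonneg Q_pos[of 0 j] Q_pos[of 1 j] j by auto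
  moreover have "0 < \<pi> 0 * Q 0 j \<or> 0 < \<pi> 1 * Q 1 j"
    using stationary_law_nonneg Q_pos[of 0 j] Q_pos[of 1 j] j by (cases "\<pi> 0 = 0") auto
  ultimately show ?thesis by linarith
qed

definition path_weight :: "int \<Rightarrow> int \<Rightarrow> (int \<Rightarrow> nat) \<Rightarrow> real" where
  "path_weight a b s = \<pi> (s a) * (\<Prod>n\<in>{a..<b}. Q (s n) (s (n + 1)))"

lemma measure_window:
  assumes "a \<le> b" "\<And>n. n \<in> {a..b} \<Longrightarrow> s n \<in> {0,1} \<and> B n \<in> sets borel"
  shows "measure M {\<omega>\<in>space M. \<forall>n\<in>{a..b}. \<theta> n \<omega> = s n \<and> X n \<omega> \<in> B n}
    = path_weight a b s * (\<Prod>n\<in>{a..b}. measure (emission (s n)) (B n))"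
proof -
  have "s a \<in> {0,1}" "\<And>n. n \<in> {a..<b} \<Longrightarrow> s n \<in> {0,1} \<and> s (n + 1) \<in> {0,1}"
    using assms by auto
  then have "path_weight a b s \<ge> 0"
    unfolding path_weight_def using stationary_law_nonneg
    by (intro mult_nonneg_nonneg prod_nonneg less_imp_le[OF Q_pos]) auto
  moreover have "(\<Prod>n\<in>{a..b}. \<integral>\<^sup>+x\<in>B n. ennreal (f (s n) x) \<partial>\<mu>)
      = ennreal (\<Prod>n\<in>{a..b}. measure (emission (s n)) (B n))"
    using assms(2)
    by (simp add: emeasure_emission[symmetric] emeasure_emission_eq_measure prod_ennreal)
  moreover have "emeasure M {\<omega>\<in>space M. \<forall>n\<in>{a..b}. \<theta> n \<omega> = s n \<and> X n \<omega> \<in> B n}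
      = ennreal (path_weight a b s) * (\<Prod>n\<in>{a..b}. \<integral>\<^sup>+x\<in>B n. ennreal (f (s n) x) \<partial>\<mu>)"
    using shmm assms unfolding stationary_hmm_def path_weight_def by blast
  ultimately show ?thesis
    by (intro measure_eq_emeasure_eq_ennreal) (simp_all add: ennreal_mult'' prod_nonneg)
qed

lemma measure_state_obs:
  assumes "j \<in> {0,1}" "E \<in> sets borel"
  shows "measure M {\<omega>\<in>space M. \<theta> n \<omega> = j \<and> X n \<omega> \<in> E} = \<pi> j * measure (emission j) E"
proof -
  have "{\<omega>\<in>space M. \<theta> n \<omega> = j \<and> X n \<omega> \<in> E}
      = {\<omega>\<in>space M. \<forall>m\<in>{n..n}. \<theta> m \<omega> = (\<lambda>_. j) m \<and> X m \<omega> \<in> (\<lambda>_. E) m}"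
    by auto
  then show ?thesis
    using measure_window[of n n "\<lambda>_. j" "\<lambda>_. E"] assms by (simp add: path_weight_def)
qed

lemma AE_states_binary: "AE \<omega> in M. \<forall>n. \<theta> n \<omega> \<in> {0,1}"
proof -
  have "AE \<omega> in M. \<theta> n \<omega> \<in> {0,1}" for n
  proof -
    have split: "{\<omega>\<in>space M. \<theta> n \<omega> \<in> {0,1}}
        = {\<omega>\<in>space M. \<theta> n \<omega> = 0 \<and> X n \<omega> \<in> UNIV} \<union> {\<omega>\<in>space M. \<theta> n \<omega> = 1 \<and> X n \<omega> \<in> UNIV}"
      by auto
    have ev: "{\<omega>\<in>space M. \<theta> n \<omega> \<in> {0,1}} \<in> events" unfolding split by measurable
    have "prob {\<omega>\<in>space M. \<theta> n \<omega> = j \<and> X n \<omega> \<in> UNIV} = \<pi> j" if "j \<in> {0,1}" for j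
      using measure_state_obs[OF that, of UNIV] prob_space_emission[OF that, THEN prob_space.prob_space]
      by simp
    with split have "prob {\<omega>\<in>space M. \<theta> n \<omega> \<in> {0,1}} = 1"
      using stationary_law_nonneg(3) by (subst split, subst finite_measure_Union) auto
    then show ?thesis using prob_eq_1[OF ev] by (auto elim: eventually_mono)
  qed
  then show ?thesis by (simp add: AE_all_countable)
qed

lemma measure_obs:
  assumes [measurable]: "E \<in> sets borel"
  shows "measure M {\<omega>\<in>space M. X n \<omega> \<in> E} = \<pi> 0 * measure (emission 0) E + \<pi> 1 * measure (emission 1) E"
proof -
  have "measure M {\<omega>\<in>space M. X n \<omega> \<in> E}
      = measure M ({\<omega>\<in>space M. \<theta> n \<omega> = 0 \<and> X n \<omega> \<in> E} \<union> {\<omega>\<in>space M. \<theta> n \<omega> = 1 \<and> X n \<omega> \<in> E})"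
    using AE_states_binary by (intro measure_eq_AE) (auto elim!: eventually_mono)
  also have "\<dots> = \<pi> 0 * measure (emission 0) E + \<pi> 1 * measure (emission 1) E"
    by (subst finite_measure_Union) (auto simp: measure_state_obs)
  finally show ?thesis .
qed

lemma measure_window_sum:
  assumes ab: "a \<le> b" and B: "\<And>n. n \<in> {a..b} \<Longrightarrow> B n \<in> sets borel"
    and T: "T \<subseteq> PiE {a..b} (\<lambda>_. {0,1})" and S: "S \<in> sets M"
    and S_iff: "\<And>\<omega>. \<omega> \<in> space M \<Longrightarrow> (\<forall>n. \<theta> n \<omega> \<in> {0,1}) \<Longrightarrow>
       \<omega> \<in> S \<longleftrightarrow> restrict (\<lambda>n. \<theta> n \<omega>) {a..b} \<in> T \<and> (\<forall>n\<in>{a..b}. X n \<omega> \<in> B n)"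
  shows "measure M S = (\<Sum>s\<in>T. path_weight a b s * (\<Prod>n\<in>{a..b}. measure (emission (s n)) (B n)))"
proof -
  define C where "C s = {\<omega>\<in>space M. \<forall>n\<in>{a..b}. \<theta> n \<omega> = s n \<and> X n \<omega> \<in> B n}" for s
  have C: "C s \<in> sets M" for s
    unfolding C_def
  proof (rule sets.sets_Collect_finite_All)
    fix n assume "n \<in> {a..b}"
    then have [measurable]: "B n \<in> sets borel" by (rule B)
    show "{\<omega>\<in>space M. \<theta> n \<omega> = s n \<and> X n \<omega> \<in> B n} \<in> sets M" by measurable
  qed simp
  have T_ext: "s \<in> T \<Longrightarrow> s \<in> extensional {a..b} \<and> (\<forall>n\<in>{a..b}. s n \<in> {0,1})" for s
    using T by (auto simp: PiE_iff)
  have finT: "finite T" using T by (rule finite_subset) (intro finite_PiE; simp)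
  have "measure M S = measure M (\<Union>s\<in>T. C s)"
  proof (rule measure_eq_AE)
    show "AE \<omega> in M. \<omega> \<in> S \<longleftrightarrow> \<omega> \<in> (\<Union>s\<in>T. C s)"
      using AE_states_binary AE_space
    proof eventually_elim
      case (elim \<omega>)
      have "\<omega> \<in> C s \<longleftrightarrow> restrict (\<lambda>n. \<theta> n \<omega>) {a..b} = s \<and> (\<forall>n\<in>{a..b}. X n \<omega> \<in> B n)"
        if "s \<in> T" for s
        using T_ext[OF that] elim by (auto simp: C_def fun_eq_iff extensional_def)
      then show ?case using S_iff[OF elim(2,1)] by auto
    qed
  qed (use S finT C in auto)
  also have "\<dots> = (\<Sum>s\<in>T. measure M (C s))"
  proof (rule finite_measure_finite_Union[OF finT])
    show "disjoint_family_on C T"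
      unfolding disjoint_family_on_def
    proof (intro ballI impI)
      fix s s' assume ss: "s \<in> T" "s' \<in> T" "s \<noteq> s'"
      then obtain n where "n \<in> {a..b}" "s n \<noteq> s' n"
        using T_ext[OF ss(1)] T_ext[OF ss(2)] extensionalityI by metis
      then show "C s \<inter> C s' = {}" unfolding C_def by auto
    qed
  qed (use C in auto)
  also have "\<dots> = (\<Sum>s\<in>T. path_weight a b s * (\<Prod>n\<in>{a..b}. measure (emission (s n)) (B n)))"
    using T_ext ab B unfolding C_def by (intro sum.cong refl measure_window) auto
  finally show ?thesis .
qed

lemma borel_measurable_lr[measurable]: "lr f \<in> borel_measurable borel"
  unfolding lr_def[abs_def] by measurable

lemma emission_lr_level_null:
  assumes cont: "continuous_on UNIV (lr_cdf M f X)" and j: "j \<in> {0,1}"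
  shows "measure (emission j) {z. lr f z = ereal c} = 0"
proof -
  have "measure M {\<omega>\<in>space M. lr f (X 1 \<omega>) = ereal c} = 0"
    using cont by (intro measure_eq_zero_if_isCont_cdf)
      (auto simp: lr_cdf_def continuous_on_eq_continuous_at)
  then have "\<pi> 0 * measure (emission 0) {z. lr f z = ereal c} + \<pi> 1 * measure (emission 1) {z. lr f z = ereal c} = 0"
    using measure_obs[of "{z. lr f z = ereal c}" 1] by simp
  moreover have "0 \<le> \<pi> 0 * measure (emission 0) {z. lr f z = ereal c}"
    "0 \<le> \<pi> 1 * measure (emission 1) {z. lr f z = ereal c}"
    using stationary_law_nonneg by auto
  ultimately have "\<pi> 0 * measure (emission 0) {z. lr f z = ereal c} = 0"
    "\<pi> 1 * measure (emission 1) {z. lr f z = ereal c} = 0"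
    by linarith+
  then show ?thesis using j stationary_law_pos[of 0] stationary_law_pos[of 1] by auto
qed

lemma emission1_le_mult_emission0:
  assumes E: "E \<subseteq> {z. lr f z \<le> ereal c}" "E \<in> sets borel" and c: "0 \<le> c"
  shows "measure (emission 1) E \<le> c * measure (emission 0) E"
proof -
  have "f 1 z \<le> c * f 0 z" if "z \<in> E" for z
  proof (cases "f 0 z = 0")
    case True
    then show ?thesis using E that f_nonneg[of 1 z] by (auto simp: lr_def split: if_splits)
  next
    case False
    then have "f 1 z / f 0 z \<le> c" "0 < f 0 z" using E that f_nonneg[of 0 z] by (auto simp: lr_def)
    then show ?thesis by (simp add: divide_le_eq)
  qed
  then have "(\<integral>\<^sup>+z. ennreal (f 1 z) * indicator E z \<partial>\<mu>) \<le> (\<integral>\<^sup>+z. ennreal c * (ennreal (f 0 z) * indicator E z) \<partial>\<mu>)"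
    using c f_nonneg[of 0] by (intro nn_integral_mono) (auto simp: indicator_def ennreal_mult''[symmetric])
  also have "\<dots> = ennreal c * (\<integral>\<^sup>+z. ennreal (f 0 z) * indicator E z \<partial>\<mu>)"
    using E(2) by (intro nn_integral_cmult) (simp add: measurable_mu_iff_borel)
  also have "\<dots> = ennreal (c * measure (emission 0) E)"
    using E(2) c by (simp add: emeasure_emission_eq_measure[symmetric] emeasure_emission ennreal_mult'')
  finally have "ennreal (measure (emission 1) E) \<le> ennreal (c * measure (emission 0) E)"
    using E(2) by (simp add: emeasure_emission_eq_measure[symmetric] emeasure_emission)
  then show ?thesis using c by (simp add: ennreal_le_iff)
qed

lemma emission0_lr_between_pos:
  assumes smono: "strict_mono_on {0..} (lr_cdf M f X)" and c: "0 < c1" "c1 < c2"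
  shows "0 < measure (emission 0) {z. ereal c1 < lr f z \<and> lr f z < ereal c2}"
proof (rule ccontr)
  define c where "c = (c1 + c2) / 2"
  define E where "E = {z. ereal c1 < lr f z \<and> lr f z \<le> ereal c}"
  have E[measurable]: "E \<in> sets borel" unfolding E_def by measurable
  have pos: "0 < measure M {\<omega>\<in>space M. X 1 \<omega> \<in> E}"
    using measure_between_pos_if_strict_mono_cdf[of "\<lambda>\<omega>. lr f (X 1 \<omega>)" "{0..}" c1 c]
      smono[unfolded lr_cdf_def[abs_def]] c
    by (simp add: E_def lr_cdf_def c_def)
  assume "\<not> ?thesis"
  moreover have "measure (emission 0) E \<le> measure (emission 0) {z. ereal c1 < lr f z \<and> lr f z < ereal c2}"
    using c by (intro finite_measure.finite_measure_mono prob_space.finite_measure prob_space_emission)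
      (auto simp: E_def c_def intro: le_less_trans)
  ultimately have null0: "measure (emission 0) E = 0" using measure_nonneg[of "emission 0" E] by linarith
  have "E \<subseteq> {z. lr f z \<le> ereal c}" "0 \<le> c" using c by (auto simp: E_def c_def)
  then have "measure (emission 1) E = 0"
    using emission1_le_mult_emission0[OF _ E, of c] null0 by (auto simp: measure_le_0_iff)
  then show False using pos null0 measure_obs[OF E, of 1] by simp
qed


lemma nn_integral_emission_bayes:
  fixes a0 a1 :: real
  assumes a: "0 \<le> a0" "0 \<le> a1" and g[measurable]: "g \<in> borel_measurable borel"
  defines "r z \<equiv> ennreal (a0 * f 0 z / (a0 * f 0 z + a1 * f 1 z))"
  shows "ennreal a0 * (\<integral>\<^sup>+z. r z * g z \<partial>emission 0) + ennreal a1 * (\<integral>\<^sup>+z. r z * g z \<partial>emission 1)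
    = ennreal a0 * (\<integral>\<^sup>+z. g z \<partial>emission 0)"
proof -
  have [measurable]: "r \<in> borel_measurable borel" unfolding r_def by measurable
  have "ennreal a0 * (\<integral>\<^sup>+z. r z * g z \<partial>emission 0) + ennreal a1 * (\<integral>\<^sup>+z. r z * g z \<partial>emission 1)
      = (\<integral>\<^sup>+z. ennreal a0 * (ennreal (f 0 z) * (r z * g z)) + ennreal a1 * (ennreal (f 1 z) * (r z * g z)) \<partial>\<mu>)"
    by (simp add: nn_integral_emission nn_integral_cmult nn_integral_add measurable_mu_iff_borel)
  also have "\<dots> = (\<integral>\<^sup>+z. ennreal a0 * (ennreal (f 0 z) * g z) \<partial>\<mu>)"
  proof (rule nn_integral_cong)
    fix z
    have "ennreal (a0 * f 0 z) * r z + ennreal (a1 * f 1 z) * r z = ennreal (a0 * f 0 z)"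
      unfolding r_def using a f_nonneg[of 0 z] f_nonneg[of 1 z] by (intro ennreal_mult_posterior_add) auto
    then show "ennreal a0 * (ennreal (f 0 z) * (r z * g z)) + ennreal a1 * (ennreal (f 1 z) * (r z * g z))
        = ennreal a0 * (ennreal (f 0 z) * g z)"
      using a f_nonneg[of 0 z] f_nonneg[of 1 z]
      by (simp add: ennreal_mult'' mult.assoc[symmetric] distrib_right[symmetric] del: ennreal_plus)
  qed
  also have "\<dots> = ennreal a0 * (\<integral>\<^sup>+z. g z \<partial>emission 0)"
    by (simp add: nn_integral_emission nn_integral_cmult measurable_mu_iff_borel)
  finally show ?thesis .
qed

end

section \<open>The observations with the one at i blanked\<close>

lemma int_window_around:
  fixes J :: "int set" and i :: int
  assumes "finite J"
  obtains a b where "a \<le> i - 1" "i + 1 \<le> b" "J \<subseteq> {a..b}"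
proof
  show "Min (insert (i - 1) J) \<le> i - 1" "i + 1 \<le> Max (insert (i + 1) J)"
    by (rule Min.coboundedI Max.coboundedI; use assms in simp)+
  show "J \<subseteq> {Min (insert (i - 1) J)..Max (insert (i + 1) J)}"
    using assms by (auto intro: Min.coboundedI Max.coboundedI)
qed

abbreviation seq_space :: "(int \<Rightarrow> real) measure" where
  "seq_space \<equiv> Pi\<^sub>M UNIV (\<lambda>_. borel)"

lemma space_seq_space[simp]: "space seq_space = UNIV"
  by (simp add: space_PiM)

lemma UNIV_in_sets_seq_space[simp]: "UNIV \<in> sets seq_space"
  using sets.top[of seq_space] by simp

locale hmm_coordinate = hmm_model +
  fixes i :: int
begin

definition blank :: "_ \<Rightarrow> int \<Rightarrow> real" where
  "blank \<omega> = (\<lambda>n. if n = i then 0 else X n \<omega>)"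

lemma measurable_blank[measurable]: "blank \<in> measurable M seq_space"
  unfolding blank_def[abs_def]
proof (rule measurable_PiM_single')
  fix n :: int
  show "(\<lambda>\<omega>. if n = i then 0 else X n \<omega>) \<in> borel_measurable M" by (cases "n = i") auto
qed (auto simp: space_PiM)

definition blank_distr :: "_ set \<Rightarrow> (int \<Rightarrow> real) measure" where
  "blank_distr S = distr (density M (indicator S)) seq_space blank"

lemma sets_blank_distr[simp, measurable_cong]: "sets (blank_distr S) = sets seq_space"
  by (simp add: blank_distr_def)

lemma space_blank_distr[simp]: "space (blank_distr S) = UNIV"
  using sets_eq_imp_space_eq[OF sets_blank_distr] by simp

lemma emeasure_blank_distr:
  assumes "S \<in> sets M" "A \<in> sets seq_space"
  shows "emeasure (blank_distr S) A = measure M (S \<inter> (blank -` A \<inter> space M))"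
proof -
  have "emeasure (blank_distr S) A = emeasure (density M (indicator S)) (blank -` A \<inter> space M)"
    unfolding blank_distr_def using assms
    by (subst emeasure_distr) (auto simp: measurable_cong_sets[OF sets_density refl])
  also have "\<dots> = emeasure M (S \<inter> (blank -` A \<inter> space M))"
    using assms
    by (subst emeasure_density)
       (auto simp: nn_integral_indicator[symmetric] indicator_inter_arith[symmetric]
         simp del: nn_integral_indicator intro!: nn_integral_cong)
  finally show ?thesis using assms by (simp add: emeasure_eq_measure)
qed

lemma finite_measure_blank_distr: "S \<in> sets M \<Longrightarrow> finite_measure (blank_distr S)"
  by (rule finite_measureI) (simp add: emeasure_blank_distr[of S UNIV])

abbreviation blank_cylinder :: "_ set \<Rightarrow> int set \<Rightarrow> (int \<Rightarrow> real set) \<Rightarrow> _ set" where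
  "blank_cylinder S J A \<equiv> {\<omega>\<in>S. \<forall>n\<in>J. blank \<omega> n \<in> A n}"

lemma measure_blank_eq_if_cylinders_eq:
  assumes S1: "S1 \<in> sets M" and S2: "S2 \<in> sets M" and c: "c1 \<ge> 0" "c2 \<ge> 0"
    and cyl: "\<And>J A. finite J \<Longrightarrow> (\<And>n. n \<in> J \<Longrightarrow> A n \<in> sets borel) \<Longrightarrow>
       c1 * measure M (blank_cylinder S1 J A) = c2 * measure M (blank_cylinder S2 J A)"
    and A: "A \<in> sets seq_space"
  shows "c1 * measure M (S1 \<inter> (blank -` A \<inter> space M)) = c2 * measure M (S2 \<inter> (blank -` A \<inter> space M))"
proof -
  have eq: "density (blank_distr S1) (\<lambda>_. ennreal c1) = density (blank_distr S2) (\<lambda>_. ennreal c2)"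
  proof (rule measure_eqI_PiM_infinite[where I=UNIV and M="\<lambda>_. borel"])
    show "finite_measure (density (blank_distr S1) (\<lambda>_. ennreal c1))"
      using S1 by (intro finite_measureI)
        (simp add: emeasure_density_const emeasure_blank_distr ennreal_mult_eq_top_iff)
  next
    fix A :: "int \<Rightarrow> real set" and J :: "int set"
    assume J: "finite J" "J \<subseteq> UNIV" and A: "\<And>n. n \<in> J \<Longrightarrow> A n \<in> sets borel"
    let ?C = "prod_emb UNIV (\<lambda>_. borel) J (Pi\<^sub>E J A)"
    have C: "?C \<in> sets seq_space" using A J by (intro sets_PiM_I) auto
    have "S \<inter> (blank -` ?C \<inter> space M) = blank_cylinder S J A" if "S \<in> sets M" for S
      using sets.sets_into_space[OF that] by (auto simp: prod_emb_iff)
    then show "emeasure (density (blank_distr S1) (\<lambda>_. ennreal c1)) ?C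
        = emeasure (density (blank_distr S2) (\<lambda>_. ennreal c2)) ?C"
      using C S1 S2 c cyl[OF J(1) A]
      by (simp add: emeasure_density_const emeasure_blank_distr ennreal_mult''[symmetric])
  qed simp_all
  have "ennreal (c1 * measure M (S1 \<inter> (blank -` A \<inter> space M)))
      = emeasure (density (blank_distr S2) (\<lambda>_. ennreal c2)) A"
    using A S1 c by (simp add: eq[symmetric] emeasure_density_const emeasure_blank_distr ennreal_mult'')
  also have "\<dots> = ennreal (c2 * measure M (S2 \<inter> (blank -` A \<inter> space M)))"
    using A S2 c by (simp add: emeasure_density_const emeasure_blank_distr ennreal_mult'')
  finally show ?thesis using c by (simp add: ennreal_inj)
qed

lemma sets_blank_cylinder:
  assumes "S \<in> sets M" "finite J" "\<And>n. n \<in> J \<Longrightarrow> A n \<in> sets borel"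
  shows "blank_cylinder S J A \<in> sets M"
proof -
  have "blank_cylinder (space M) J A \<in> sets M"
  proof (rule sets.sets_Collect_finite_All[OF _ assms(2)])
    fix n assume "n \<in> J"
    then have [measurable]: "A n \<in> sets borel" by (rule assms(3))
    show "{\<omega>\<in>space M. blank \<omega> n \<in> A n} \<in> sets M"
      by (cases "n = i") (auto simp: blank_def)
  qed
  moreover have "blank_cylinder S J A = S \<inter> blank_cylinder (space M) J A"
    using sets.sets_into_space[OF assms(1)] by auto
  ultimately show ?thesis using assms(1) by simp
qed

lemma not_in_blank_cylinder: "i \<in> J \<Longrightarrow> 0 \<notin> A i \<Longrightarrow> \<not> (\<forall>n\<in>J. blank \<omega> n \<in> A n)"
  by (auto simp: blank_def)

lemma blank_cylinder_window:
  assumes "finite J" "\<And>n. n \<in> J \<Longrightarrow> A n \<in> sets borel" "\<not> (i \<in> J \<and> 0 \<notin> A i)"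
  obtains a b B where "a \<le> i - 1" "i + 1 \<le> b" "\<And>n. B n \<in> sets borel" "B i = UNIV"
    "\<And>\<omega>. (\<forall>n\<in>J. blank \<omega> n \<in> A n) \<longleftrightarrow> (\<forall>n\<in>{a..b}. X n \<omega> \<in> B n)"
proof -
  obtain a b where ab: "a \<le> i - 1" "i + 1 \<le> b" "J \<subseteq> {a..b}"
    using int_window_around[OF assms(1)] by blast
  define B where "B n = (if n \<in> J \<and> n \<noteq> i then A n else UNIV)" for n
  show ?thesis
  proof
    show "B n \<in> sets borel" for n using assms(2) by (auto simp: B_def)
    show "(\<forall>n\<in>J. blank \<omega> n \<in> A n) \<longleftrightarrow> (\<forall>n\<in>{a..b}. X n \<omega> \<in> B n)" for \<omega>
      using assms(3) ab(3) by (auto simp: blank_def B_def split: if_splits)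
  qed (use ab in \<open>auto simp: B_def\<close>)
qed

abbreviation state_event :: "nat \<Rightarrow> _ set" where
  "state_event j \<equiv> {\<omega>\<in>space M. \<theta> i \<omega> = j}"

lemma emission_indep_blank_cylinder:
  assumes j: "j \<in> {0,1}" and E[measurable]: "E \<in> sets borel" and J: "finite J"
    and A: "\<And>n. n \<in> J \<Longrightarrow> A n \<in> sets borel"
  shows "measure M (blank_cylinder {\<omega>\<in>state_event j. X i \<omega> \<in> E} J A)
       = measure (emission j) E * measure M (blank_cylinder (state_event j) J A)"
proof (cases "i \<in> J \<and> 0 \<notin> A i")
  case False
  obtain a b B where ab: "a \<le> i - 1" "i + 1 \<le> b" and B: "\<And>n. B n \<in> sets borel"
    and Bi: "B i = UNIV" and cyl: "\<And>\<omega>. (\<forall>n\<in>J. blank \<omega> n \<in> A n) \<longleftrightarrow> (\<forall>n\<in>{a..b}. X n \<omega> \<in> B n)"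
    by (rule blank_cylinder_window[of J A, OF J A False]) (assumption | rule that)+
  define T where "T = {s \<in> PiE {a..b} (\<lambda>_. {0::nat,1}). s i = j}"
  have iab: "i \<in> {a..b}" using ab by auto
  have T: "T \<subseteq> PiE {a..b} (\<lambda>_. {0,1})" and restr:
    "\<And>\<omega>. \<forall>n. \<theta> n \<omega> \<in> {0,1} \<Longrightarrow> restrict (\<lambda>n. \<theta> n \<omega>) {a..b} \<in> T \<longleftrightarrow> \<theta> i \<omega> = j"
    using iab unfolding T_def by auto
  have B_upd: "(\<forall>n\<in>{a..b}. X n \<omega> \<in> (B(i := E)) n) \<longleftrightarrow> X i \<omega> \<in> E \<and> (\<forall>n\<in>{a..b}. X n \<omega> \<in> B n)"
    for \<omega> using iab Bi by auto
  have "a \<le> b" using ab by simp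
  have "measure M (blank_cylinder {\<omega>\<in>state_event j. X i \<omega> \<in> E} J A)
      = (\<Sum>s\<in>T. path_weight a b s * (\<Prod>n\<in>{a..b}. measure (emission (s n)) ((B(i := E)) n)))"
  proof (rule measure_window_sum[OF \<open>a \<le> b\<close> _ T])
    fix \<omega> assume "\<omega> \<in> space M" "\<forall>n. \<theta> n \<omega> \<in> {0,1}"
    then show "\<omega> \<in> blank_cylinder {\<omega>\<in>state_event j. X i \<omega> \<in> E} J A
        \<longleftrightarrow> restrict (\<lambda>n. \<theta> n \<omega>) {a..b} \<in> T \<and> (\<forall>n\<in>{a..b}. X n \<omega> \<in> (B(i := E)) n)"
      unfolding B_upd restr[OF \<open>\<forall>n. \<theta> n \<omega> \<in> {0,1}\<close>] cyl[of \<omega>, symmetric] by auto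
  next
    show "(B(i := E)) n \<in> sets borel" for n using B by simp
  qed (intro sets_blank_cylinder J A; measurable)
  also have "\<dots> = (\<Sum>s\<in>T. measure (emission j) E *
      (path_weight a b s * (\<Prod>n\<in>{a..b}. measure (emission (s n)) (B n))))"
  proof (rule sum.cong[OF refl])
    fix s assume "s \<in> T"
    then have "s i = j" "s(i := j) = s" by (auto simp: T_def)
    then show "path_weight a b s * (\<Prod>n\<in>{a..b}. measure (emission (s n)) ((B(i := E)) n))
        = measure (emission j) E * (path_weight a b s * (\<Prod>n\<in>{a..b}. measure (emission (s n)) (B n)))"
      using prod_emission_update[of "{a..b}" i s j B E] iab j Bi by simp
  qed
  also have "\<dots> = measure (emission j) E * measure M (blank_cylinder (state_event j) J A)"
    unfolding sum_distrib_left[symmetric]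
  proof (rule arg_cong[where f="(*) _"], rule measure_window_sum[OF \<open>a \<le> b\<close> B T, symmetric])
    fix \<omega> assume "\<omega> \<in> space M" "\<forall>n. \<theta> n \<omega> \<in> {0,1}"
    then show "\<omega> \<in> blank_cylinder (state_event j) J A
        \<longleftrightarrow> restrict (\<lambda>n. \<theta> n \<omega>) {a..b} \<in> T \<and> (\<forall>n\<in>{a..b}. X n \<omega> \<in> B n)"
      unfolding restr[OF \<open>\<forall>n. \<theta> n \<omega> \<in> {0,1}\<close>] cyl[of \<omega>, symmetric] by auto
  qed (intro sets_blank_cylinder J A; measurable)
  finally show ?thesis .
next
  case True
  then show ?thesis by (simp add: not_in_blank_cylinder)
qed

lemma emission_indep_blank:
  assumes j: "j \<in> {0,1}" and E[measurable]: "E \<in> sets borel" and A: "A \<in> sets seq_space"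
  shows "measure M ({\<omega>\<in>state_event j. X i \<omega> \<in> E} \<inter> (blank -` A \<inter> space M))
       = measure (emission j) E * measure M (state_event j \<inter> (blank -` A \<inter> space M))"
proof -
  have "1 * measure M ({\<omega>\<in>state_event j. X i \<omega> \<in> E} \<inter> (blank -` A \<inter> space M))
      = measure (emission j) E * measure M (state_event j \<inter> (blank -` A \<inter> space M))"
  proof (rule measure_blank_eq_if_cylinders_eq[OF _ _ _ _ _ A])
    fix J :: "int set" and A' :: "int \<Rightarrow> real set"
    assume "finite J" "\<And>n. n \<in> J \<Longrightarrow> A' n \<in> sets borel"
    then show "1 * measure M (blank_cylinder {\<omega>\<in>state_event j. X i \<omega> \<in> E} J A')
        = measure (emission j) E * measure M (blank_cylinder (state_event j) J A')"
      using emission_indep_blank_cylinder[OF j E] by simp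
  qed auto
  then show ?thesis by simp
qed

abbreviation states_around :: "nat \<Rightarrow> nat \<Rightarrow> nat \<Rightarrow> _ set" where
  "states_around u j v \<equiv> {\<omega>\<in>space M. \<theta> (i - 1) \<omega> = u \<and> \<theta> i \<omega> = j \<and> \<theta> (i + 1) \<omega> = v}"

lemma path_weight_update:
  assumes "a \<le> i - 1" "i + 1 \<le> b"
  shows "path_weight a b (s(i := x)) = \<pi> (s a) * Q (s (i - 1)) x * Q x (s (i + 1)) *
     (\<Prod>n\<in>{a..<b} - {i - 1} - {i}. Q (s n) (s (n + 1)))"
proof -
  let ?s = "s(i := x)"
  have "(\<Prod>n\<in>{a..<b}. Q (?s n) (?s (n + 1)))
      = Q (?s (i - 1)) (?s i) * (Q (?s i) (?s (i + 1)) *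
        (\<Prod>n\<in>{a..<b} - {i - 1} - {i}. Q (?s n) (?s (n + 1))))"
    using assms by (subst prod.remove[of _ "i - 1"], simp, simp, subst prod.remove[of _ i]) auto
  also have "(\<Prod>n\<in>{a..<b} - {i - 1} - {i}. Q (?s n) (?s (n + 1)))
      = (\<Prod>n\<in>{a..<b} - {i - 1} - {i}. Q (s n) (s (n + 1)))"
    by (intro prod.cong) auto
  finally show ?thesis using assms by (simp add: path_weight_def mult_ac)
qed

text \<open>Exchanging the hidden state at i between 0 and 1 multiplies the weight of every path by
  the same transition ratio, while the emission factors of a cylinder that leaves X i free do not
  change.\<close>
lemma flip_state_blank_cylinder:
  assumes u: "u \<in> {0,1}" and v: "v \<in> {0,1}" and J: "finite J"
    and A: "\<And>n. n \<in> J \<Longrightarrow> A n \<in> sets borel"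
  shows "Q u 1 * Q 1 v * measure M (blank_cylinder (states_around u 0 v) J A)
       = Q u 0 * Q 0 v * measure M (blank_cylinder (states_around u 1 v) J A)"
proof (cases "i \<in> J \<and> 0 \<notin> A i")
  case False
  obtain a b B where ab: "a \<le> i - 1" "i + 1 \<le> b" and B: "\<And>n. B n \<in> sets borel"
    and Bi: "B i = UNIV" and cyl: "\<And>\<omega>. (\<forall>n\<in>J. blank \<omega> n \<in> A n) \<longleftrightarrow> (\<forall>n\<in>{a..b}. X n \<omega> \<in> B n)"
    by (rule blank_cylinder_window[of J A, OF J A False]) (assumption | rule that)+
  define T where "T x = {s \<in> PiE {a..b} (\<lambda>_. {0::nat,1}). s (i - 1) = u \<and> s i = x \<and> s (i + 1) = v}" for x
  define P where "P s = (\<Prod>n\<in>{a..b}. measure (emission (s n)) (B n))" for s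
  have iab: "i \<in> {a..b}" "i - 1 \<in> {a..b}" "i + 1 \<in> {a..b}" "a \<le> b" using ab by auto
  have m: "measure M (blank_cylinder (states_around u x v) J A) = (\<Sum>s\<in>T x. path_weight a b s * P s)" for x
    unfolding P_def
  proof (rule measure_window_sum[OF iab(4) B])
    show "T x \<subseteq> {a..b} \<rightarrow>\<^sub>E {0, 1}" unfolding T_def by auto
    show "blank_cylinder (states_around u x v) J A \<in> sets M"
      by (intro sets_blank_cylinder J A) measurable
    fix \<omega> assume "\<omega> \<in> space M" "\<forall>n. \<theta> n \<omega> \<in> {0, 1}"
    then show "\<omega> \<in> blank_cylinder (states_around u x v) J A
        \<longleftrightarrow> restrict (\<lambda>n. \<theta> n \<omega>) {a..b} \<in> T x \<and> (\<forall>n\<in>{a..b}. X n \<omega> \<in> B n)"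
      unfolding cyl[of \<omega>, symmetric] T_def using iab by auto
  qed
  have "(\<Sum>s\<in>T 0. Q u 1 * Q 1 v * (path_weight a b s * P s))
      = (\<Sum>s\<in>T 1. Q u 0 * Q 0 v * (path_weight a b s * P s))"
  proof (rule sum.reindex_bij_witness[where i="\<lambda>s. s(i := 0)" and j="\<lambda>s. s(i := 1)"])
    fix s assume s: "s \<in> T 0"
    then show "s(i := 1, i := 0) = s" "s(i := 1) \<in> T 1"
      using iab unfolding T_def by (auto simp: PiE_iff extensional_def)
    have si: "s (i - 1) = u" "s i = 0" "s (i + 1) = v" "s = s(i := 0)" using s unfolding T_def by auto
    have "P (s(i := 1)) = P s"
      using prod_emission_update[of "{a..b}" i s 1 B UNIV] iab si(2) Bi
        prob_space_emission[of 1, THEN prob_space.prob_space]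
      by (simp add: P_def fun_upd_idem)
    moreover have "(s(i := 1)) a = s a" using ab by auto
    ultimately show "Q u 0 * Q 0 v * (path_weight a b (s(i := 1)) * P (s(i := 1)))
        = Q u 1 * Q 1 v * (path_weight a b s * P s)"
      using path_weight_update[OF ab, of s 1] path_weight_update[OF ab, of s 0] si
      by (simp add: mult_ac)
  next
    fix s assume "s \<in> T 1"
    then show "s(i := 0, i := 1) = s" "s(i := 0) \<in> T 0"
      using iab unfolding T_def by (auto simp: PiE_iff extensional_def)
  qed
  then show ?thesis unfolding m sum_distrib_left by simp
qed (simp add: not_in_blank_cylinder)

lemma null_state1_imp_null_state0:
  assumes A: "A \<in> sets seq_space"
    and null: "measure M (state_event 1 \<inter> (blank -` A \<inter> space M)) = 0"
  shows "measure M (state_event 0 \<inter> (blank -` A \<inter> space M)) = 0"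
proof -
  let ?A = "blank -` A \<inter> space M"
  have [measurable]: "?A \<in> sets M" using A by measurable
  have null_around: "measure M (states_around u 0 v \<inter> ?A) = 0" if u: "u \<in> {0,1}" and v: "v \<in> {0,1}" for u v
  proof -
    have "Q u 1 * Q 1 v * measure M (states_around u 0 v \<inter> ?A) = Q u 0 * Q 0 v * measure M (states_around u 1 v \<inter> ?A)"
      using flip_state_blank_cylinder[OF u v] Q_pos u v
      by (intro measure_blank_eq_if_cylinders_eq[OF _ _ _ _ _ A]) (auto intro!: mult_nonneg_nonneg simp: less_imp_le)
    moreover have "measure M (states_around u 1 v \<inter> ?A) \<le> measure M (state_event 1 \<inter> ?A)"
      by (intro finite_measure_mono) auto
    then have "measure M (states_around u 1 v \<inter> ?A) = 0" using null measure_nonneg[of M] by (simp add: antisym)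
    moreover have "Q u 1 > 0" "Q 1 v > 0" using Q_pos u v by auto
    ultimately show ?thesis by simp
  qed
  have "measure M (state_event 0 \<inter> ?A)
      = measure M (\<Union>(u, v)\<in>{0,1} \<times> {0,1}. states_around u 0 v \<inter> ?A)"
  proof (rule measure_eq_AE)
    show "AE \<omega> in M. \<omega> \<in> state_event 0 \<inter> ?A \<longleftrightarrow> \<omega> \<in> (\<Union>(u, v)\<in>{0,1} \<times> {0,1}. states_around u 0 v \<inter> ?A)"
      using AE_states_binary
    proof (rule eventually_mono)
      fix \<omega> assume "\<forall>n. \<theta> n \<omega> \<in> {0,1}"
      then have "\<theta> (i - 1) \<omega> \<in> {0,1}" "\<theta> (i + 1) \<omega> \<in> {0,1}" by blast+
      then show "\<omega> \<in> state_event 0 \<inter> ?A \<longleftrightarrow> \<omega> \<in> (\<Union>(u, v)\<in>{0,1} \<times> {0,1}. states_around u 0 v \<inter> ?A)"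
        by blast
    qed
  qed auto
  also have "\<dots> \<le> (\<Sum>p\<in>{0,1} \<times> {0,1}. measure M ((\<lambda>(u, v). states_around u 0 v \<inter> ?A) p))"
    by (rule finite_measure_subadditive_finite) auto
  also have "\<dots> = 0" using null_around by (intro sum.neutral) auto
  finally show ?thesis using measure_nonneg[of M] by (simp add: antisym)
qed

definition blank_law :: "(int \<Rightarrow> real) measure" where
  "blank_law = distr M seq_space blank"

lemma sets_blank_law[simp, measurable_cong]: "sets blank_law = sets seq_space"
  by (simp add: blank_law_def)

lemma measurable_blank_law_iff: "h \<in> borel_measurable blank_law \<longleftrightarrow> h \<in> borel_measurable seq_space"
  using measurable_cong_sets[OF sets_blank_law refl] by blast

lemma prob_space_blank_law: "prob_space blank_law"
  unfolding blank_law_def by (rule prob_space_distr) simp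

lemma absolutely_continuous_blank_distr_state:
  "absolutely_continuous blank_law (blank_distr (state_event j))"
  unfolding absolutely_continuous_def
proof
  fix A assume "A \<in> null_sets blank_law"
  then have A: "A \<in> sets seq_space" "emeasure blank_law A = 0" by auto
  then have "measure M (blank -` A \<inter> space M) = 0"
    by (simp add: blank_law_def emeasure_distr emeasure_eq_measure)
  moreover have "measure M (state_event j \<inter> (blank -` A \<inter> space M)) \<le> measure M (blank -` A \<inter> space M)"
    using A(1) by (intro finite_measure_mono) auto
  ultimately have "measure M (state_event j \<inter> (blank -` A \<inter> space M)) = 0"
    by (simp add: measure_le_0_iff)
  then show "A \<in> null_sets (blank_distr (state_event j))"
    using A by (simp add: null_sets_def emeasure_blank_distr)
qed

text \<open>Informally, state_weight j w = P(theta i = j | blank = w).\<close>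
definition state_weight :: "nat \<Rightarrow> (int \<Rightarrow> real) \<Rightarrow> ennreal" where
  "state_weight j = RN_deriv blank_law (blank_distr (state_event j))"

lemma borel_measurable_state_weight[measurable]: "state_weight j \<in> borel_measurable seq_space"
  unfolding state_weight_def using borel_measurable_RN_deriv measurable_blank_law_iff by blast

lemma sigma_finite_blank_law: "sigma_finite_measure blank_law"
  using prob_space_blank_law by (simp add: prob_space_def finite_measure_def)

lemma state_weight_finite: "AE w in blank_law. state_weight j w \<noteq> \<infinity>"
  unfolding state_weight_def
  using finite_measure_blank_distr[of "state_event j"] absolutely_continuous_blank_distr_state
  by (intro sigma_finite_measure.RN_deriv_finite[OF sigma_finite_blank_law])
     (simp_all add: finite_measure_def)

lemma nn_integral_blank_distr_state:
  assumes "h \<in> borel_measurable seq_space"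
  shows "(\<integral>\<^sup>+w. h w \<partial>blank_distr (state_event j)) = (\<integral>\<^sup>+w. state_weight j w * h w \<partial>blank_law)"
proof -
  have "blank_distr (state_event j) = density blank_law (state_weight j)"
    unfolding state_weight_def
    by (rule sigma_finite_measure.density_RN_deriv[symmetric, OF sigma_finite_blank_law
          absolutely_continuous_blank_distr_state]) simp
  then show ?thesis
    using assms by (simp add: nn_integral_density measurable_blank_law_iff)
qed

lemma distr_state_blank_obs:
  assumes j: "j \<in> {0,1}"
  shows "distr (density M (indicator (state_event j))) (seq_space \<Otimes>\<^sub>M borel) (\<lambda>\<omega>. (blank \<omega>, X i \<omega>))
    = blank_distr (state_event j) \<Otimes>\<^sub>M emission j"
proof (rule pair_measure_eqI[symmetric])
  show "sigma_finite_measure (blank_distr (state_event j))"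
    using finite_measure_blank_distr[of "state_event j"] by (simp add: finite_measure_def)
  show "sigma_finite_measure (emission j)"
    by (rule sigma_finite_emission[OF j])
  show "sets (blank_distr (state_event j) \<Otimes>\<^sub>M emission j)
      = sets (distr (density M (indicator (state_event j))) (seq_space \<Otimes>\<^sub>M borel) (\<lambda>\<omega>. (blank \<omega>, X i \<omega>)))"
    unfolding sets_distr by (rule sets_pair_measure_cong[OF sets_blank_distr sets_emission])
next
  fix A E assume "A \<in> sets (blank_distr (state_event j))" "E \<in> sets (emission j)"
  then have A: "A \<in> sets seq_space" and E[measurable]: "E \<in> sets borel"
    by (auto simp: sets_emission)
  have "emeasure (distr (density M (indicator (state_event j))) (seq_space \<Otimes>\<^sub>M borel) (\<lambda>\<omega>. (blank \<omega>, X i \<omega>))) (A \<times> E)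
      = emeasure (density M (indicator (state_event j))) ((\<lambda>\<omega>. (blank \<omega>, X i \<omega>)) -` (A \<times> E) \<inter> space M)"
    using A by (subst emeasure_distr) (auto simp: measurable_cong_sets[OF sets_density refl])
  also have "\<dots> = emeasure M (state_event j \<inter> ((\<lambda>\<omega>. (blank \<omega>, X i \<omega>)) -` (A \<times> E) \<inter> space M))"
    using A
    by (subst emeasure_density)
       (auto intro!: nn_integral_cong simp: nn_integral_indicator[symmetric]
         indicator_inter_arith[symmetric] simp del: nn_integral_indicator)
  also have "state_event j \<inter> ((\<lambda>\<omega>. (blank \<omega>, X i \<omega>)) -` (A \<times> E) \<inter> space M)
      = {\<omega>\<in>state_event j. X i \<omega> \<in> E} \<inter> (blank -` A \<inter> space M)"
    by auto
  also have "emeasure M \<dots> = emeasure (blank_distr (state_event j)) A * emeasure (emission j) E"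
    using A j emission_indep_blank[OF j E A]
    by (simp add: emeasure_eq_measure emeasure_blank_distr emeasure_emission_eq_measure ennreal_mult''
        mult.commute)
  finally show "emeasure (blank_distr (state_event j)) A * emeasure (emission j) E
    = emeasure (distr (density M (indicator (state_event j))) (seq_space \<Otimes>\<^sub>M borel) (\<lambda>\<omega>. (blank \<omega>, X i \<omega>))) (A \<times> E)"
    ..
qed

lemma nn_integral_state_blank_obs:
  assumes j: "j \<in> {0,1}" and h[measurable]: "h \<in> borel_measurable (seq_space \<Otimes>\<^sub>M borel)"
  shows "(\<integral>\<^sup>+\<omega>. indicator (state_event j) \<omega> * h (blank \<omega>, X i \<omega>) \<partial>M)
    = (\<integral>\<^sup>+w. state_weight j w * (\<integral>\<^sup>+z. h (w, z) \<partial>emission j) \<partial>blank_law)"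
proof -
  interpret E: prob_space "emission j" by (rule prob_space_emission[OF j])
  have h': "h \<in> borel_measurable (seq_space \<Otimes>\<^sub>M emission j)"
    using h measurable_cong_sets[OF sets_pair_measure_cong[OF refl sets_emission] refl] by blast
  have "(\<integral>\<^sup>+\<omega>. indicator (state_event j) \<omega> * h (blank \<omega>, X i \<omega>) \<partial>M)
      = integral\<^sup>N (distr (density M (indicator (state_event j))) (seq_space \<Otimes>\<^sub>M borel)
          (\<lambda>\<omega>. (blank \<omega>, X i \<omega>))) h"
    by (simp add: nn_integral_density nn_integral_distr measurable_cong_sets[OF sets_density refl])
  also have "\<dots> = (\<integral>\<^sup>+w. \<integral>\<^sup>+z. h (w, z) \<partial>emission j \<partial>blank_distr (state_event j))"
    unfolding distr_state_blank_obs[OF j]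
    by (rule E.nn_integral_fst[symmetric])
       (simp add: measurable_cong_sets[OF sets_pair_measure_cong[OF sets_blank_distr sets_emission] refl])
  also have "\<dots> = (\<integral>\<^sup>+w. state_weight j w * (\<integral>\<^sup>+z. h (w, z) \<partial>emission j) \<partial>blank_law)"
    using E.borel_measurable_nn_integral_fst[OF h'] by (intro nn_integral_blank_distr_state)
  finally show ?thesis .
qed

section \<open>The posterior probability of state 0\<close>

definition weight :: "nat \<Rightarrow> (int \<Rightarrow> real) \<Rightarrow> real" where
  "weight j w = enn2real (state_weight j w)"

lemma borel_measurable_weight[measurable]: "weight j \<in> borel_measurable seq_space"
  unfolding weight_def by measurable

lemma weight_nonneg: "0 \<le> weight j w"
  by (simp add: weight_def)

lemma AE_state_weight_eq_weight: "AE w in blank_law. state_weight j w = ennreal (weight j w)"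
  using state_weight_finite[of j] by (elim eventually_mono) (simp add: weight_def ennreal_enn2real_if)

definition posterior :: "(int \<Rightarrow> real) \<times> real \<Rightarrow> real" where
  "posterior p = weight 0 (fst p) * f 0 (snd p) / (weight 0 (fst p) * f 0 (snd p) + weight 1 (fst p) * f 1 (snd p))"

lemma borel_measurable_posterior[measurable]: "posterior \<in> borel_measurable (seq_space \<Otimes>\<^sub>M borel)"
  unfolding posterior_def by measurable

lemma posterior_range: "0 \<le> posterior p \<and> posterior p \<le> 1"
proof -
  have "0 \<le> weight 0 (fst p) * f 0 (snd p)" "0 \<le> weight 1 (fst p) * f 1 (snd p)"
    using weight_nonneg f_nonneg by auto
  then show ?thesis unfolding posterior_def by (auto simp: divide_le_eq_1)
qed

definition posterior_state0 :: "_ \<Rightarrow> real" where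
  "posterior_state0 \<omega> = posterior (blank \<omega>, X i \<omega>)"

lemma borel_measurable_posterior_state0[measurable]: "posterior_state0 \<in> borel_measurable M"
  unfolding posterior_state0_def by measurable

lemma AE_state_event_split: "AE \<omega> in M. indicator (state_event 0) \<omega> + indicator (state_event 1) \<omega> = (1::ennreal)"
  using AE_space AE_states_binary by eventually_elim (auto simp: indicator_def)

lemma nn_integral_posterior_eq_state0:
  assumes DD[measurable]: "DD \<in> sets (seq_space \<Otimes>\<^sub>M borel)"
  shows "(\<integral>\<^sup>+\<omega>. ennreal (posterior_state0 \<omega>) * indicator DD (blank \<omega>, X i \<omega>) \<partial>M)
       = (\<integral>\<^sup>+\<omega>. indicator (state_event 0) \<omega> * indicator DD (blank \<omega>, X i \<omega>) \<partial>M)"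
proof -
  define H where "H p = ennreal (posterior p) * indicator DD p" for p
  have [measurable]: "H \<in> borel_measurable (seq_space \<Otimes>\<^sub>M borel)" unfolding H_def by measurable
  have inner: "(\<lambda>w. \<integral>\<^sup>+z. h (w, z) \<partial>emission j) \<in> borel_measurable seq_space"
    if "j \<in> {0,1}" "h \<in> borel_measurable (seq_space \<Otimes>\<^sub>M borel)" for h j
    using sigma_finite_measure.borel_measurable_nn_integral_fst[OF sigma_finite_emission[OF that(1)], of h seq_space]
      that(2) measurable_cong_sets[OF sets_pair_measure_cong[OF refl sets_emission[of j]] refl] by blast
  have "(\<integral>\<^sup>+\<omega>. ennreal (posterior_state0 \<omega>) * indicator DD (blank \<omega>, X i \<omega>) \<partial>M)
      = (\<integral>\<^sup>+\<omega>. indicator (state_event 0) \<omega> * H (blank \<omega>, X i \<omega>) + indicator (state_event 1) \<omega> * H (blank \<omega>, X i \<omega>) \<partial>M)"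
    using AE_state_event_split by (intro nn_integral_cong_AE, elim eventually_mono)
      (simp add: H_def posterior_state0_def distrib_right[symmetric])
  also have "\<dots> = (\<integral>\<^sup>+w. state_weight 0 w * (\<integral>\<^sup>+z. H (w, z) \<partial>emission 0)
      + state_weight 1 w * (\<integral>\<^sup>+z. H (w, z) \<partial>emission 1) \<partial>blank_law)"
    using inner[of 0 H] inner[of 1 H]
    by (simp add: nn_integral_add nn_integral_state_blank_obs measurable_blank_law_iff)
  also have "\<dots> = (\<integral>\<^sup>+w. state_weight 0 w * (\<integral>\<^sup>+z. indicator DD (w, z) \<partial>emission 0) \<partial>blank_law)"
    using AE_state_weight_eq_weight[of 0] AE_state_weight_eq_weight[of 1]
  proof (intro nn_integral_cong_AE, eventually_elim)
    case (elim w)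
    show ?case
      unfolding elim H_def posterior_def fst_conv snd_conv
      by (rule nn_integral_emission_bayes[OF weight_nonneg weight_nonneg]) measurable
  qed
  also have "\<dots> = (\<integral>\<^sup>+\<omega>. indicator (state_event 0) \<omega> * indicator DD (blank \<omega>, X i \<omega>) \<partial>M)"
    by (simp add: nn_integral_state_blank_obs)
  finally show ?thesis .
qed

definition observations :: "_ \<Rightarrow> int \<Rightarrow> real" where
  "observations \<omega> n = X n \<omega>"

lemma blank_update_eq_observations: "(blank \<omega>)(i := X i \<omega>) = observations \<omega>"
  by (simp add: fun_eq_iff blank_def observations_def)

lemma obs_algebra_eq: "obs_algebra M X = vimage_algebra (space M) observations seq_space"
  unfolding obs_algebra_def observations_def[abs_def] ..

lemma measurable_observations[measurable]: "observations \<in> measurable M seq_space"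
  unfolding observations_def[abs_def] by (rule measurable_PiM_single') (auto simp: space_PiM)

lemma sets_obs_algebra: "sets (obs_algebra M X) = {observations -` A \<inter> space M | A. A \<in> sets seq_space}"
  unfolding obs_algebra_eq by (rule sets_vimage_algebra2) simp

lemma subalgebra_obs_algebra: "subalgebra M (obs_algebra M X)"
  unfolding subalgebra_def sets_obs_algebra by (auto simp: obs_algebra_eq)

lemma posterior_state0_measurable_obs: "posterior_state0 \<in> borel_measurable (obs_algebra M X)"
proof -
  have "(\<lambda>x. x(i := 0)) = (\<lambda>x. \<lambda>n. if n = i then 0 else x n)"
    by (auto simp: fun_eq_iff)
  also have "\<dots> \<in> measurable seq_space seq_space"
    by (rule measurable_PiM_single') (auto simp: space_PiM)
  finally have [measurable]: "(\<lambda>x. x(i := 0)) \<in> measurable seq_space seq_space" .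
  have [measurable]: "(\<lambda>x. x i) \<in> borel_measurable seq_space"
    by (rule measurable_component_singleton) simp
  have "(\<lambda>x. posterior (x(i := 0), x i)) \<in> borel_measurable seq_space"
    by measurable
  moreover have "observations \<in> measurable (obs_algebra M X) seq_space"
    unfolding obs_algebra_eq by (rule measurable_vimage_algebra1) simp
  ultimately have "(\<lambda>\<omega>. posterior ((observations \<omega>)(i := 0), observations \<omega> i))
      \<in> borel_measurable (obs_algebra M X)"
    using measurable_comp by (simp add: comp_def)
  moreover have "(observations \<omega>)(i := 0) = blank \<omega>" "observations \<omega> i = X i \<omega>" for \<omega>
    by (simp_all add: fun_eq_iff blank_def observations_def)
  ultimately show ?thesis
    unfolding posterior_state0_def[abs_def] by simp
qed

lemma obs_event_as_blank_obs:
  assumes "A \<in> sets seq_space"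
  shows "(\<lambda>p. (fst p)(i := snd p)) -` A \<in> sets (seq_space \<Otimes>\<^sub>M borel)"
    and "\<And>\<omega>. \<omega> \<in> observations -` A \<longleftrightarrow> (blank \<omega>, X i \<omega>) \<in> (\<lambda>p. (fst p)(i := snd p)) -` A"
proof -
  have "(\<lambda>p. (fst p)(i := snd p)) = (\<lambda>p n. if n = i then snd p else fst p n)"
    by (intro ext) simp
  also have "\<dots> \<in> measurable (seq_space \<Otimes>\<^sub>M borel) seq_space"
    by (rule measurable_PiM_single') (auto simp: space_PiM)
  finally have "(\<lambda>p. (fst p)(i := snd p)) \<in> measurable (seq_space \<Otimes>\<^sub>M borel) seq_space" .
  from measurable_sets[OF this assms]
  show "(\<lambda>p. (fst p)(i := snd p)) -` A \<in> sets (seq_space \<Otimes>\<^sub>M borel)"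
    by (simp add: space_pair_measure)
  show "\<omega> \<in> observations -` A \<longleftrightarrow> (blank \<omega>, X i \<omega>) \<in> (\<lambda>p. (fst p)(i := snd p)) -` A" for \<omega>
    by (simp add: blank_update_eq_observations)
qed

lemma set_integral_state0_eq_posterior_state0:
  assumes A: "A \<in> sets seq_space"
  defines "B \<equiv> observations -` A \<inter> space M"
  shows "(\<integral>\<omega>\<in>B. (indicator (state_event 0) \<omega> :: real) \<partial>M) = (\<integral>\<omega>\<in>B. posterior_state0 \<omega> \<partial>M)"
proof -
  let ?DD = "(\<lambda>p. (fst p)(i := snd p)) -` A"
  note DD = obs_event_as_blank_obs[OF A]
  have [measurable]: "B \<in> sets M" unfolding B_def using A by measurable
  have B_iff: "\<omega> \<in> B \<longleftrightarrow> (blank \<omega>, X i \<omega>) \<in> ?DD" if "\<omega> \<in> space M" for \<omega>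
    using that by (simp add: B_def blank_update_eq_observations)
  have "(\<integral>\<omega>\<in>B. (indicator (state_event 0) \<omega> :: real) \<partial>M)
      = enn2real (\<integral>\<^sup>+\<omega>. ennreal (indicator B \<omega> * indicator (state_event 0) \<omega>) \<partial>M)"
    unfolding set_lebesgue_integral_def by (simp add: integral_eq_nn_integral)
  also have "(\<integral>\<^sup>+\<omega>. ennreal (indicator B \<omega> * indicator (state_event 0) \<omega>) \<partial>M)
      = (\<integral>\<^sup>+\<omega>. indicator (state_event 0) \<omega> * indicator ?DD (blank \<omega>, X i \<omega>) \<partial>M)"
    by (intro nn_integral_cong) (auto simp: B_iff indicator_def)
  also have "\<dots> = (\<integral>\<^sup>+\<omega>. ennreal (posterior_state0 \<omega>) * indicator ?DD (blank \<omega>, X i \<omega>) \<partial>M)"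
    by (rule nn_integral_posterior_eq_state0[OF DD(1), symmetric])
  also have "\<dots> = (\<integral>\<^sup>+\<omega>. ennreal (indicator B \<omega> * posterior_state0 \<omega>) \<partial>M)"
    by (intro nn_integral_cong) (auto simp: B_iff indicator_def)
  also have "enn2real \<dots> = (\<integral>\<omega>\<in>B. posterior_state0 \<omega> \<partial>M)"
    using posterior_range unfolding set_lebesgue_integral_def
    by (simp add: integral_eq_nn_integral posterior_state0_def)
  finally show ?thesis .
qed

lemma AE_ell_inf_eq_posterior_state0: "AE \<omega> in M. ell_inf M \<theta> X i \<omega> = posterior_state0 \<omega>"
proof -
  interpret S: finite_measure_subalgebra M "obs_algebra M X"
    by unfold_locales (rule subalgebra_obs_algebra)
  have integrable_state0: "integrable M (indicator (state_event 0) :: _ \<Rightarrow> real)"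
    by (rule integrable_const_bound[where B=1]) (auto simp: indicator_def)
  have "\<bar>posterior_state0 \<omega>\<bar> \<le> 1" for \<omega>
    using posterior_range[of "(blank \<omega>, X i \<omega>)"] by (simp add: posterior_state0_def)
  then have integrable_posterior: "integrable M posterior_state0"
    by (intro integrable_const_bound[where B=1]) auto
  show ?thesis unfolding ell_inf_def
  proof (rule S.real_cond_exp_charact[OF _ integrable_state0 integrable_posterior
        posterior_state0_measurable_obs])
    fix B assume "B \<in> sets (obs_algebra M X)"
    then show "(\<integral>\<omega>\<in>B. indicator (state_event 0) \<omega> \<partial>M) = (\<integral>\<omega>\<in>B. posterior_state0 \<omega> \<partial>M)"
      unfolding sets_obs_algebra using set_integral_state0_eq_posterior_state0 by blast
  qed
qed

lemma posterior_level_lr: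
  assumes "0 < t" "t < 1" "posterior (w, z) = t"
  shows "lr f z = ereal (weight 0 w * (1 - t) / (t * weight 1 w))"
proof -
  have "f 0 z \<noteq> 0 \<and> f 1 z / f 0 z = weight 0 w * (1 - t) / (t * weight 1 w)"
    using assms unfolding posterior_def
    by (intro posterior_level_ratio) (auto simp: weight_nonneg f_nonneg)
  then show ?thesis unfolding lr_def by simp
qed

lemma emeasure_blank_obs_split:
  assumes [measurable]: "DD \<in> sets (seq_space \<Otimes>\<^sub>M borel)"
  shows "emeasure M {\<omega>\<in>space M. (blank \<omega>, X i \<omega>) \<in> DD}
    = (\<integral>\<^sup>+w. state_weight 0 w * emeasure (emission 0) (Pair w -` DD) \<partial>blank_law)
      + (\<integral>\<^sup>+w. state_weight 1 w * emeasure (emission 1) (Pair w -` DD) \<partial>blank_law)"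
proof -
  have inner: "(\<integral>\<^sup>+z. indicator DD (w, z) \<partial>emission j) = emeasure (emission j) (Pair w -` DD)" for w j
  proof -
    have "Pair w -` DD \<in> sets (emission j)"
      using sets_Pair1[OF assms, of w] by (simp add: sets_emission)
    then have "(\<integral>\<^sup>+z. indicator (Pair w -` DD) z \<partial>emission j) = emeasure (emission j) (Pair w -` DD)"
      by (rule nn_integral_indicator)
    then show ?thesis by (simp add: indicator_def)
  qed
  have "{\<omega>\<in>space M. (blank \<omega>, X i \<omega>) \<in> DD} \<in> sets M" by measurable
  then have "emeasure M {\<omega>\<in>space M. (blank \<omega>, X i \<omega>) \<in> DD}
      = (\<integral>\<^sup>+\<omega>. indicator {\<omega>\<in>space M. (blank \<omega>, X i \<omega>) \<in> DD} \<omega> \<partial>M)"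
    by (rule nn_integral_indicator[symmetric])
  also have "\<dots> = (\<integral>\<^sup>+\<omega>. indicator DD (blank \<omega>, X i \<omega>) \<partial>M)"
    by (intro nn_integral_cong) (simp add: indicator_def)
  also have "\<dots> = (\<integral>\<^sup>+\<omega>. indicator (state_event 0) \<omega> * indicator DD (blank \<omega>, X i \<omega>)
      + indicator (state_event 1) \<omega> * indicator DD (blank \<omega>, X i \<omega>) \<partial>M)"
    using AE_state_event_split by (intro nn_integral_cong_AE, elim eventually_mono) (simp add: distrib_right[symmetric])
  also have "\<dots> = (\<integral>\<^sup>+\<omega>. indicator (state_event 0) \<omega> * indicator DD (blank \<omega>, X i \<omega>) \<partial>M)
      + (\<integral>\<^sup>+\<omega>. indicator (state_event 1) \<omega> * indicator DD (blank \<omega>, X i \<omega>) \<partial>M)"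
    by (rule nn_integral_add) measurable
  finally show ?thesis by (simp add: nn_integral_state_blank_obs inner)
qed

lemma measure_posterior_state0_eq:
  assumes cont: "continuous_on UNIV (lr_cdf M f X)" and t: "0 < t" "t < 1"
  shows "measure M {\<omega>\<in>space M. posterior_state0 \<omega> = t} = 0"
proof -
  define DD where "DD = {p \<in> space (seq_space \<Otimes>\<^sub>M borel). posterior p = t}"
  have [measurable]: "DD \<in> sets (seq_space \<Otimes>\<^sub>M borel)" unfolding DD_def by measurable
  have "emeasure (emission j) (Pair w -` DD) = 0" if "j \<in> {0,1}" for j w
  proof -
    have "emeasure (emission j) (Pair w -` DD)
        \<le> emeasure (emission j) {z. lr f z = ereal (weight 0 w * (1 - t) / (t * weight 1 w))}"
      using posterior_level_lr[OF t] by (intro emeasure_mono) (auto simp: DD_def space_pair_measure)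
    also have "\<dots> = 0"
      using emission_lr_level_null[OF cont that] by (simp add: emeasure_emission_eq_measure[OF that])
    finally show ?thesis by simp
  qed
  then have "emeasure M {\<omega>\<in>space M. (blank \<omega>, X i \<omega>) \<in> DD} = 0"
    by (simp add: emeasure_blank_obs_split)
  moreover have "{\<omega>\<in>space M. posterior_state0 \<omega> = t} = {\<omega>\<in>space M. (blank \<omega>, X i \<omega>) \<in> DD}"
    by (auto simp: DD_def posterior_state0_def space_pair_measure)
  ultimately show ?thesis by (simp add: measure_def)
qed

lemma emission0_posterior_between_pos:
  assumes smono: "strict_mono_on {0..} (lr_cdf M f X)"
    and w: "0 < weight 0 w" "0 < weight 1 w" and ab: "0 < a" "a < b" "b < 1"
  shows "0 < measure (emission 0) {z. a < posterior (w, z) \<and> posterior (w, z) < b}"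
proof -
  define c1 where "c1 = weight 0 w * (1 - b) / (b * weight 1 w)"
  define c2 where "c2 = weight 0 w * (1 - a) / (a * weight 1 w)"
  have c: "0 < c1" "c1 < c2" unfolding c1_def c2_def using w ab
    by (auto simp: field_simps intro!: mult_strict_left_mono)
  have "{z. ereal c1 < lr f z \<and> lr f z < ereal c2} \<subseteq> {z. a < posterior (w, z) \<and> posterior (w, z) < b}"
  proof safe
    fix z assume z: "ereal c1 < lr f z" "lr f z < ereal c2"
    then have "f 0 z \<noteq> 0" using c by (auto simp: lr_def split: if_splits)
    then have "0 < f 0 z" "c1 < f 1 z / f 0 z" "f 1 z / f 0 z < c2" "f 1 z = (f 1 z / f 0 z) * f 0 z"
      using z f_nonneg[of 0 z] by (auto simp: lr_def)
    then show "a < posterior (w, z)" "posterior (w, z) < b"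
      using posterior_between[OF w(1,2) _ ab, of "f 0 z" "f 1 z / f 0 z"] w
      unfolding posterior_def c1_def c2_def by (metis fst_conv snd_conv)+
  qed
  then have "measure (emission 0) {z. ereal c1 < lr f z \<and> lr f z < ereal c2}
      \<le> measure (emission 0) {z. a < posterior (w, z) \<and> posterior (w, z) < b}"
    using prob_space_emission[of 0]
    by (intro finite_measure.finite_measure_mono prob_space.finite_measure) (auto simp: sets_emission)
  with emission0_lr_between_pos[OF smono c] show ?thesis by linarith
qed

lemma not_AE_state_weight_zero: "\<not> (AE w in blank_law. state_weight 0 w = 0 \<or> state_weight 1 w = 0)"
proof
  assume AEZ: "AE w in blank_law. state_weight 0 w = 0 \<or> state_weight 1 w = 0"
  define Z where "Z = {w. state_weight 1 w = 0}"
  have Z[measurable]: "Z \<in> sets seq_space"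
    using measurable_sets[OF borel_measurable_state_weight[of 1], of "{0}"] by (simp add: Z_def vimage_def)
  have nn_Z: "emeasure (blank_distr (state_event j)) Z = (\<integral>\<^sup>+w. state_weight j w * indicator Z w \<partial>blank_law)" for j
    by (simp add: nn_integral_blank_distr_state[symmetric])
  have "emeasure (blank_distr (state_event 1)) Z = 0"
    unfolding nn_Z by (auto intro!: nn_integral_zero' simp: Z_def indicator_def)
  then have "measure M (state_event 1 \<inter> (blank -` Z \<inter> space M)) = 0"
    by (simp add: emeasure_blank_distr)
  then have null0: "emeasure (blank_distr (state_event 0)) Z = 0"
    by (simp add: emeasure_blank_distr null_state1_imp_null_state0)
  have "ennreal (\<pi> 0) = emeasure (blank_distr (state_event 0)) UNIV"
    using measure_state_obs[of 0 UNIV i] prob_space_emission[of 0, THEN prob_space.prob_space]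
    by (simp add: emeasure_blank_distr)
  also have "\<dots> = (\<integral>\<^sup>+w. 1 \<partial>blank_distr (state_event 0))"
    by simp
  also have "\<dots> = (\<integral>\<^sup>+w. state_weight 0 w * 1 \<partial>blank_law)"
    by (rule nn_integral_blank_distr_state) simp
  also have "\<dots> = (\<integral>\<^sup>+w. state_weight 0 w * indicator Z w \<partial>blank_law)"
    using AEZ by (intro nn_integral_cong_AE) (auto elim!: eventually_mono simp: Z_def indicator_def)
  also have "\<dots> = 0" using null0 by (simp add: nn_Z)
  finally show False using stationary_law_pos[of 0] by simp
qed

lemma measure_posterior_state0_between_pos:
  assumes smono: "strict_mono_on {0..} (lr_cdf M f X)" and ab: "0 < a" "a < b" "b < 1"
  shows "0 < measure M {\<omega>\<in>space M. a < posterior_state0 \<omega> \<and> posterior_state0 \<omega> < b}"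
proof (rule ccontr)
  define DD where "DD = {p \<in> space (seq_space \<Otimes>\<^sub>M borel). a < posterior p \<and> posterior p < b}"
  have [measurable]: "DD \<in> sets (seq_space \<Otimes>\<^sub>M borel)" unfolding DD_def by measurable
  assume "\<not> ?thesis"
  then have "measure M {\<omega>\<in>space M. a < posterior_state0 \<omega> \<and> posterior_state0 \<omega> < b} = 0"
    by (simp add: not_less measure_le_0_iff)
  moreover have "{\<omega>\<in>space M. a < posterior_state0 \<omega> \<and> posterior_state0 \<omega> < b}
      = {\<omega>\<in>space M. (blank \<omega>, X i \<omega>) \<in> DD}"
    by (auto simp: DD_def posterior_state0_def space_pair_measure)
  ultimately have "emeasure M {\<omega>\<in>space M. (blank \<omega>, X i \<omega>) \<in> DD} = 0"
    by (simp add: emeasure_eq_measure)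
  then have "(\<integral>\<^sup>+w. state_weight 0 w * emeasure (emission 0) (Pair w -` DD) \<partial>blank_law) = 0"
    by (simp add: emeasure_blank_obs_split)
  moreover have "(\<lambda>w. emeasure (emission 0) (Pair w -` DD)) \<in> borel_measurable seq_space"
    by (rule sigma_finite_measure.measurable_emeasure_Pair[OF sigma_finite_emission])
       (simp_all add: sets_pair_measure_cong[OF refl sets_emission])
  ultimately have "AE w in blank_law. state_weight 0 w * emeasure (emission 0) (Pair w -` DD) = 0"
    by (subst (asm) nn_integral_0_iff_AE) (simp_all add: measurable_blank_law_iff)
  then have "AE w in blank_law. state_weight 0 w = 0 \<or> state_weight 1 w = 0"
    using state_weight_finite[of 0] state_weight_finite[of 1]
  proof eventually_elim
    case (elim w)
    show ?case
    proof (rule ccontr)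
      assume "\<not> ?case"
      then have "0 < weight 0 w" "0 < weight 1 w"
        using elim by (auto simp: weight_def enn2real_positive_iff less_top[symmetric] zero_less_iff_neq_zero)
      then have "0 < measure (emission 0) (Pair w -` DD)"
        using emission0_posterior_between_pos[OF smono _ _ ab]
        by (simp add: DD_def space_pair_measure)
      with elim \<open>\<not> ?case\<close> show False
        by (simp add: emeasure_emission_eq_measure)
    qed
  qed
  with not_AE_state_weight_zero show False ..
qed

end

theorem lemma18:
  fixes M :: "'w measure" and \<mu> :: "real measure" and D :: "real set"
    and Q :: "nat \<Rightarrow> nat \<Rightarrow> real" and \<pi> :: "nat \<Rightarrow> real" and f :: "nat \<Rightarrow> real \<Rightarrow> real"
    and \<theta> :: "int \<Rightarrow> 'w \<Rightarrow> nat" and X :: "int \<Rightarrow> 'w \<Rightarrow> real" and i :: int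
  assumes "ref_measure \<mu> D"
    and "densities \<mu> f"
    and "A1 \<mu> D f"
    and "A2 Q \<pi>"
    and "stationary_hmm M \<mu> Q \<pi> f \<theta> X"
    and "continuous_on UNIV (lr_cdf M f X)"
    and "strict_mono_on {0..} (lr_cdf M f X)"
  shows "continuous_on {0<..<1} (cond_mean_below M (ell_inf M \<theta> X i))
    \<and> strict_mono_on {0<..<1} (cond_mean_below M (ell_inf M \<theta> X i))
    \<and> (\<forall>t\<in>{0<..<1}. cond_mean_below M (ell_inf M \<theta> X i) t < t)"
proof -
  have "hmm_model M \<mu> D Q \<pi> f \<theta> X"
    using assms(1,2,4,5) by (auto simp: hmm_model_def hmm_model_axioms_def stationary_hmm_def)
  then interpret hmm_coordinate M \<mu> D Q \<pi> f \<theta> X i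
    by (simp add: hmm_coordinate_def)
  interpret posterior: unit_interval_variable M posterior_state0
    by unfold_locales (simp_all add: posterior_state0_def posterior_range)
  have "cond_mean_below M (ell_inf M \<theta> X i) = cond_mean_below M posterior_state0"
    using AE_ell_inf_eq_posterior_state0
    by (intro cond_mean_below_cong_AE) (simp_all add: ell_inf_def borel_measurable_cond_exp2)
  then show ?thesis
    using posterior.cond_mean_below_properties[OF measure_posterior_state0_eq[OF assms(6)]
        measure_posterior_state0_between_pos[OF assms(7)]]
    by simp
qed

end
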